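(* Let $I, J$ be completely regular Hausdorff spaces, $X, Y$ Hausdorff locally convex topological vector spaces over $\mathbb{C}$, with $X\otimes Y$ given a locally convex Hausdorff topology for which $(x,y)\mapsto x\otimes y$ is continuous. Then: (a) if $I \times J$ is locally compact, then $C_{0}(I \times J, X \otimes Y)$ is the closure of $C_{0}(I, X) \otimes C_{0}(J, Y)$ in the uniform topology; (b) $C_{b}(I \times J, X \otimes Y)$ is the closure of $C_{b}(I, X) \otimes C_{b}(J, Y)$ in the strict topology; (c) $C(I \times J, X \otimes Y)$ is the closure of $C(I, X) \otimes C(J, Y)$ in the compact-open topology (and in the point-open topology).
   Context: For $f:I\to X$, $g:J\to Y$, $(f\otimes g)(t,s)=f(t)\otimes g(s)$ and $\mathcal{W}\otimes\mathcal{V}=\mathrm{span}\{f\otimes g:f\in\mathcal{W},g\in\mathcal{V}\}$. For a locally convex $Z$ with seminorms $\mathfrak{A}$: $g:\Omega\to Z$ vanishes at infinity if for each $p\in\mathfrak{A}$, $\epsilon>0$ the closure of $\{x:p(g(x))\ge\epsilon\}$ is compact; $C_0(\Omega,Z)$ are continuous functions vanishing at infinity; $C_b(\Omega,Z)$ continuous functions with bounded range. The uniform topology uses seminorms $f\mapsto\sup_\Omega p(f)$. The strict topology on $C_b(\Omega,Z)$ ($\Omega$ completely regular Hausdorff) is given by seminorms $f\mapsto\sup_x v(x)p(f(x))$ where $p\in\mathfrak{A}$ and $v:\Omega\to\mathbb{R}_+$ ranges over upper semicontinuous functions vanishing at infinity. The compact-open (resp. point-open) topology uses seminorms $f\mapsto\sup_K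 p(f)$ with $K$ compact (resp. finite). *)

theory Defs
  imports "HOL-Analysis.Analysis"
begin

definition seminorm :: "(complex \<Rightarrow> 'x \<Rightarrow> 'x) \<Rightarrow> ('x::ab_group_add \<Rightarrow> real) \<Rightarrow> bool" where
  "seminorm s p \<longleftrightarrow> (\<forall>x y. p (x + y) \<le> p x + p y) \<and> (\<forall>c x. p (s c x) = cmod c * p x)"

text \<open>A Hausdorff locally convex space over the complex numbers: a complex vector space
  together with a separating family of seminorms defining its topology.\<close>
definition hlcs :: "(complex \<Rightarrow> 'x \<Rightarrow> 'x) \<Rightarrow> ('x::ab_group_add \<Rightarrow> real) set \<Rightarrow> bool" where
  "hlcs s A \<longleftrightarrow> vector_space s \<and> (\<forall>p\<in>A. seminorm s p) \<and> (\<forall>x. x \<noteq> 0 \<longrightarrow> (\<exists>p\<in>A. p x \<noteq> 0))"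

definition semtop :: "('x::ab_group_add \<Rightarrow> real) set \<Rightarrow> 'x topology" where
  "semtop A = topology (\<lambda>U. \<forall>x\<in>U. \<exists>P e. finite P \<and> P \<subseteq> A \<and> e > 0 \<and>
                                  {y. \<forall>p\<in>P. p (y - x) < e} \<subseteq> U)"

text \<open>\<open>tp\<close> makes \<open>Z\<close> the algebraic tensor product \<open>X \<otimes> Y\<close> (up to isomorphism):
  \<open>tp\<close> is bilinear, its values span \<open>Z\<close>, and it maps pairs of linearly independent
  sets to linearly independent sets (so the induced map \<open>X \<otimes> Y \<rightarrow> Z\<close> is bijective).\<close>
definition alg_tensor ::
  "(complex \<Rightarrow> 'x \<Rightarrow> 'x) \<Rightarrow> (complex \<Rightarrow> 'y \<Rightarrow> 'y) \<Rightarrow> (complex \<Rightarrow> 'z \<Rightarrow> 'z)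
     \<Rightarrow> ('x::ab_group_add \<Rightarrow> 'y::ab_group_add \<Rightarrow> 'z::ab_group_add) \<Rightarrow> bool" where
  "alg_tensor sX sY sZ tp \<longleftrightarrow>
     (\<forall>y. Vector_Spaces.linear sX sZ (\<lambda>x. tp x y)) \<and>
     (\<forall>x. Vector_Spaces.linear sY sZ (\<lambda>y. tp x y)) \<and>
     module.span sZ {tp x y | x y. True} = UNIV \<and>
     (\<forall>A B. \<not> module.dependent sX A \<and> \<not> module.dependent sY B \<longrightarrow>
        inj_on (\<lambda>(a, b). tp a b) (A \<times> B) \<and>
        \<not> module.dependent sZ ((\<lambda>(a, b). tp a b) ` (A \<times> B)))"

text \<open>Functions are taken extensional: zero outside the underlying space.\<close>
definition Cfun :: "'a topology \<Rightarrow> ('z::ab_group_add \<Rightarrow> real) set \<Rightarrow> ('a \<Rightarrow> 'z) set" where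
  "Cfun \<Omega> A = {f. continuous_map \<Omega> (semtop A) f \<and> (\<forall>x. x \<notin> topspace \<Omega> \<longrightarrow> f x = 0)}"

definition vanishes_at_infinity :: "'a topology \<Rightarrow> ('z \<Rightarrow> real) set \<Rightarrow> ('a \<Rightarrow> 'z) \<Rightarrow> bool" where
  "vanishes_at_infinity \<Omega> A g \<longleftrightarrow>
     (\<forall>p\<in>A. \<forall>e>0. compactin \<Omega> (\<Omega> closure_of {x \<in> topspace \<Omega>. p (g x) \<ge> e}))"

definition C0fun :: "'a topology \<Rightarrow> ('z::ab_group_add \<Rightarrow> real) set \<Rightarrow> ('a \<Rightarrow> 'z) set" where
  "C0fun \<Omega> A = {f \<in> Cfun \<Omega> A. vanishes_at_infinity \<Omega> A f}"

definition Cbfun :: "'a topology \<Rightarrow> ('z::ab_group_add \<Rightarrow> real) set \<Rightarrow> ('a \<Rightarrow> 'z) set" where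
  "Cbfun \<Omega> A = {f \<in> Cfun \<Omega> A. \<forall>p\<in>A. \<exists>C. \<forall>x\<in>topspace \<Omega>. p (f x) \<le> C}"

definition tensor_fun :: "('x \<Rightarrow> 'y \<Rightarrow> 'z) \<Rightarrow> ('i \<Rightarrow> 'x) \<Rightarrow> ('j \<Rightarrow> 'y) \<Rightarrow> ('i \<times> 'j \<Rightarrow> 'z)" where
  "tensor_fun tp f g = (\<lambda>(t, s). tp (f t) (g s))"

definition tensor_span ::
  "(complex \<Rightarrow> 'z \<Rightarrow> 'z) \<Rightarrow> ('x \<Rightarrow> 'y \<Rightarrow> 'z::ab_group_add) \<Rightarrow> ('i \<Rightarrow> 'x) set \<Rightarrow> ('j \<Rightarrow> 'y) set
     \<Rightarrow> ('i \<times> 'j \<Rightarrow> 'z) set" where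
  "tensor_span sZ tp W V =
     {(\<lambda>u. \<Sum>k<(n::nat). sZ (c k) (tensor_fun tp (f k) (g k) u)) | n c f g.
        \<forall>k<n. f k \<in> W \<and> g k \<in> V}"

definition ssup :: "'a set \<Rightarrow> ('a \<Rightarrow> real) \<Rightarrow> real" where
  "ssup S h = Sup (insert 0 (h ` S))"

definition uniform_seminorms :: "'a topology \<Rightarrow> ('z \<Rightarrow> real) set \<Rightarrow> (('a \<Rightarrow> 'z) \<Rightarrow> real) set" where
  "uniform_seminorms \<Omega> A = {(\<lambda>f. ssup (topspace \<Omega>) (\<lambda>x. p (f x))) | p. p \<in> A}"

definition usc :: "'a topology \<Rightarrow> ('a \<Rightarrow> real) \<Rightarrow> bool" where
  "usc \<Omega> v \<longleftrightarrow> (\<forall>a. openin \<Omega> {x \<in> topspace \<Omega>. v x < a})"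

definition strict_weight :: "'a topology \<Rightarrow> ('a \<Rightarrow> real) \<Rightarrow> bool" where
  "strict_weight \<Omega> v \<longleftrightarrow> (\<forall>x\<in>topspace \<Omega>. v x \<ge> 0) \<and> usc \<Omega> v \<and>
     (\<forall>e>0. compactin \<Omega> (\<Omega> closure_of {x \<in> topspace \<Omega>. \<bar>v x\<bar> \<ge> e}))"

definition strict_seminorms :: "'a topology \<Rightarrow> ('z \<Rightarrow> real) set \<Rightarrow> (('a \<Rightarrow> 'z) \<Rightarrow> real) set" where
  "strict_seminorms \<Omega> A = {(\<lambda>f. ssup (topspace \<Omega>) (\<lambda>x. v x * p (f x))) | p v. p \<in> A \<and> strict_weight \<Omega> v}"

definition compact_open_seminorms :: "'a topology \<Rightarrow> ('z \<Rightarrow> real) set \<Rightarrow> (('a \<Rightarrow> 'z) \<Rightarrow> real) set" where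
  "compact_open_seminorms \<Omega> A = {(\<lambda>f. ssup K (\<lambda>x. p (f x))) | p K. p \<in> A \<and> compactin \<Omega> K}"

definition point_open_seminorms :: "'a topology \<Rightarrow> ('z \<Rightarrow> real) set \<Rightarrow> (('a \<Rightarrow> 'z) \<Rightarrow> real) set" where
  "point_open_seminorms \<Omega> A = {(\<lambda>f. ssup K (\<lambda>x. p (f x))) | p K. p \<in> A \<and> finite K \<and> K \<subseteq> topspace \<Omega>}"

definition closure_in_fs :: "(('a \<Rightarrow> 'z::ab_group_add) \<Rightarrow> real) set \<Rightarrow> ('a \<Rightarrow> 'z) set \<Rightarrow> ('a \<Rightarrow> 'z) set
     \<Rightarrow> ('a \<Rightarrow> 'z) set" where
  "closure_in_fs S M W = {F \<in> M. \<forall>P. finite P \<and> P \<subseteq> S \<longrightarrow>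
      (\<forall>e>0. \<exists>w\<in>W. \<forall>q\<in>P. q (\<lambda>u. F u - w u) < e)}"

end

theory Submission
  imports Defs
begin

(*
  Fix F continuous on I \<times> J, finitely many seminorms with sum r, and compact sets K1 \<subseteq> I,
  K2 \<subseteq> J.  By the tube lemma every t \<in> K1 has a neighbourhood A_t with
  r (F (t', s) - F (t, s)) < \<eta>/2 for t' \<in> A_t and s near K2.  A partition of unity (\<alpha>_i) on K1
  subordinate to the A_i, followed by a partition of unity (\<beta>_j) on K2 subordinate to
  neighbourhoods of the points j on which every F (i, -) varies by less than \<eta>/2, gives

    w (t, s) = \<Sum>(i, j). \<alpha>_i t * \<beta>_j s * F (i, j),

  which is \<eta>-close to F on K1 \<times> K2 and satisfies p (w u) \<le> p (F u) + \<eta> everywhere.  It lies in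
  the tensor span: F (i, j) is a finite sum of elementary tensors x \<otimes> y, and
  \<alpha>_i t * \<beta>_j s * (x \<otimes> y) = (\<alpha>_i t * x) \<otimes> (\<beta>_j s * y).  Each density statement follows by
  choosing the compact set: an arbitrary one (compact-open), one outside which the weights are
  small (strict), or one outside which F is small (C_0, where local compactness keeps the
  supports of the \<alpha>_i and \<beta>_j inside compact sets).  Continuity of \<otimes> at the origin gives
  p (x \<otimes> y) \<le> C * q x * q' y for continuous seminorms q, q', so the tensor spans lie in the
  respective function spaces.
*)

section \<open>Seminorms and the topology they generate\<close>

context
  fixes s :: "complex \<Rightarrow> 'x::ab_group_add \<Rightarrow> 'x" and p :: "'x \<Rightarrow> real"
  assumes vs: "vector_space s" and sn: "seminorm s p"
begin

interpretation vector_space s by (fact vs)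

lemma seminorm_triangle: "p (x + y) \<le> p x + p y"
  using sn by (simp add: seminorm_def)

lemma seminorm_scale: "p (s c x) = cmod c * p x"
  using sn by (simp add: seminorm_def)

lemma seminorm_scale_real: "p (s (complex_of_real a) x) = \<bar>a\<bar> * p x"
  by (simp add: seminorm_scale)

lemma seminorm_zero [simp]: "p 0 = 0"
  using seminorm_scale[of 0 0] by simp

lemma seminorm_minus: "p (- x) = p x"
  using seminorm_scale[of "-1" x] by simp

lemma seminorm_nonneg: "0 \<le> p x"
  using seminorm_triangle[of x "- x"] seminorm_minus[of x] by simp

lemma seminorm_diff_commute: "p (x - y) = p (y - x)"
  using seminorm_minus[of "x - y"] by simp

lemma seminorm_triangle_diff: "p (x - z) \<le> p (x - y) + p (y - z)"
  using seminorm_triangle[of "x - y" "y - z"] by simp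

lemma seminorm_diff_le: "p (x - y) \<le> p x + p y"
  using seminorm_triangle[of x "- y"] seminorm_minus[of y] by simp

lemma seminorm_le_add_diff: "p x \<le> p y + p (x - y)"
  using seminorm_triangle[of y "x - y"] by simp

lemma seminorm_sum_le: "p (\<Sum>a\<in>T. f a) \<le> (\<Sum>a\<in>T. p (f a))"
  by (induction T rule: infinite_finite_induct) (auto intro: order_trans[OF seminorm_triangle])

lemma seminorm_combination_le:
  assumes "finite T" "\<And>k. k \<in> T \<Longrightarrow> 0 \<le> c k"
    and "\<And>k. k \<in> T \<Longrightarrow> 0 < c k \<Longrightarrow> p (z k - z0) \<le> \<eta>"
  shows "p ((\<Sum>k\<in>T. s (complex_of_real (c k)) (z k)) - s (complex_of_real (\<Sum>k\<in>T. c k)) z0)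
           \<le> (\<Sum>k\<in>T. c k) * \<eta>"
proof -
  have "(\<Sum>k\<in>T. s (complex_of_real (c k)) (z k)) - s (complex_of_real (\<Sum>k\<in>T. c k)) z0
      = (\<Sum>k\<in>T. s (complex_of_real (c k)) (z k - z0))"
    by (simp add: scale_sum_left scale_right_diff_distrib sum_subtractf)
  also have "p \<dots> \<le> (\<Sum>k\<in>T. p (s (complex_of_real (c k)) (z k - z0)))"
    by (rule seminorm_sum_le)
  also have "\<dots> = (\<Sum>k\<in>T. c k * p (z k - z0))"
    using assms(2) by (simp add: seminorm_scale_real)
  also have "\<dots> \<le> (\<Sum>k\<in>T. c k * \<eta>)"
    using assms(2,3) by (intro sum_mono) (force simp: order_le_less)
  finally show ?thesis by (simp add: sum_distrib_right)
qed

end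

lemma seminorm_sum:
  assumes "vector_space s" "\<And>p. p \<in> P \<Longrightarrow> seminorm s p"
  shows "seminorm s (\<lambda>z. \<Sum>p\<in>P. p z)"
  unfolding seminorm_def
  using seminorm_triangle[OF assms] seminorm_scale[OF assms]
  by (auto simp: sum.distrib[symmetric] sum_distrib_left intro: sum_mono)

lemma hlcs_vector_space: "hlcs s A \<Longrightarrow> vector_space s"
  by (simp add: hlcs_def)

lemma hlcs_seminorm: "hlcs s A \<Longrightarrow> p \<in> A \<Longrightarrow> seminorm s p"
  by (simp add: hlcs_def)

lemma hlcs_seminorm_sum: "hlcs s A \<Longrightarrow> P \<subseteq> A \<Longrightarrow> seminorm s (\<lambda>z. \<Sum>p\<in>P. p z)"
  by (auto intro: seminorm_sum hlcs_vector_space hlcs_seminorm)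

lemma hlcs_seminorm_le_sum:
  assumes "hlcs s A" "finite P" "P \<subseteq> A" "q \<in> P"
  shows "q z \<le> (\<Sum>p\<in>P. p z)"
  using assms by (intro member_le_sum) (auto intro: seminorm_nonneg hlcs_vector_space hlcs_seminorm)

lemma hlcs_scale_into_ball:
  assumes A: "hlcs s A" and P: "finite P" "P \<subseteq> A" and "d > 0" and a: "(\<Sum>q\<in>P. q x) < a"
  shows "\<forall>q\<in>P. q (s (complex_of_real (d / a)) x - 0) < d"
proof
  fix q assume q: "q \<in> P"
  have "0 \<le> (\<Sum>q\<in>P. q x)"
    by (rule seminorm_nonneg[OF hlcs_vector_space[OF A] hlcs_seminorm_sum[OF A P(2)]])
  then have "a > 0"
    using a by linarith
  have "q x < a"
    using hlcs_seminorm_le_sum[OF A P q, of x] a by linarith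
  then have "d / a * q x < d / a * a"
    using \<open>a > 0\<close> \<open>d > 0\<close> by (intro mult_strict_left_mono) auto
  then show "q (s (complex_of_real (d / a)) x - 0) < d"
    using \<open>a > 0\<close> \<open>d > 0\<close> q P(2)
      seminorm_scale_real[OF hlcs_vector_space[OF A] hlcs_seminorm[OF A], of q "d / a" x]
    by auto
qed

lemma seminorm_product_combination_le:
  assumes vs: "vector_space s" and r: "seminorm s r" and T: "finite T1" "finite T2"
    and a: "\<And>i. i \<in> T1 \<Longrightarrow> 0 \<le> a i" and b: "\<And>j. j \<in> T2 \<Longrightarrow> 0 \<le> b j"
    and close: "\<And>i j. i \<in> T1 \<Longrightarrow> j \<in> T2 \<Longrightarrow> 0 < a i \<Longrightarrow> 0 < b j \<Longrightarrow> r (z (i, j) - z0) \<le> \<eta>"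
  shows "r ((\<Sum>k\<in>T1 \<times> T2. s (complex_of_real (a (fst k) * b (snd k))) (z k))
           - s (complex_of_real (sum a T1 * sum b T2)) z0) \<le> sum a T1 * sum b T2 * \<eta>"
proof -
  have "sum a T1 * sum b T2 = (\<Sum>k\<in>T1 \<times> T2. a (fst k) * b (snd k))"
    by (simp add: sum_product sum.cartesian_product case_prod_beta)
  moreover have "r ((\<Sum>k\<in>T1 \<times> T2. s (complex_of_real (a (fst k) * b (snd k))) (z k))
      - s (complex_of_real (\<Sum>k\<in>T1 \<times> T2. a (fst k) * b (snd k))) z0)
      \<le> (\<Sum>k\<in>T1 \<times> T2. a (fst k) * b (snd k)) * \<eta>"
  proof (rule seminorm_combination_le[OF vs r])
    show "finite (T1 \<times> T2)"
      using T by simp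
    show "0 \<le> a (fst k) * b (snd k)" if "k \<in> T1 \<times> T2" for k
      using that a b by (auto simp: mem_Times_iff)
    show "r (z k - z0) \<le> \<eta>" if "k \<in> T1 \<times> T2" "0 < a (fst k) * b (snd k)" for k
    proof -
      obtain i j where k: "k = (i, j)"
        by (cases k)
      then have "i \<in> T1" "j \<in> T2"
        using that(1) by auto
      then have "0 < a i" "0 < b j"
        using that(2) a[OF \<open>i \<in> T1\<close>] b[OF \<open>j \<in> T2\<close>] k by (auto simp: zero_less_mult_iff)
      then show ?thesis
        using close[OF \<open>i \<in> T1\<close> \<open>j \<in> T2\<close>] k by simp
    qed
  qed
  ultimately show ?thesis
    by simp
qed

lemma seminorm_le_of_scaled_approx:
  assumes vs: "vector_space s" and p: "seminorm s p" and r: "\<And>z. p z \<le> r z"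
    and L: "0 \<le> L" "L \<le> 1" and "0 \<le> \<eta>" and approx: "r (w - s (complex_of_real L) z) \<le> L * \<eta>"
  shows "p w \<le> p z + \<eta>"
proof -
  have "p w \<le> p (s (complex_of_real L) z) + p (w - s (complex_of_real L) z)"
    by (rule seminorm_le_add_diff[OF vs p])
  also have "\<dots> \<le> L * p z + L * \<eta>"
    using L approx r[of "w - s (complex_of_real L) z"] by (simp add: seminorm_scale_real[OF vs p])
  also have "\<dots> \<le> p z + \<eta>"
    using L \<open>0 \<le> \<eta>\<close> seminorm_nonneg[OF vs p, of z]
    by (intro add_mono) (simp_all add: mult_left_le_one_le)
  finally show ?thesis .
qed

lemma istopology_semtop:
  fixes A :: "('x::ab_group_add \<Rightarrow> real) set"
  shows "istopology (\<lambda>U. \<forall>x\<in>U. \<exists>P e. finite P \<and> P \<subseteq> A \<and> e > 0 \<and> {y. \<forall>p\<in>P. p (y - x) < e} \<subseteq> U)"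
  unfolding istopology_def
proof (intro conjI allI impI ballI)
  fix S T x
  assume S: "\<forall>x\<in>S. \<exists>P e. finite P \<and> P \<subseteq> A \<and> e > 0 \<and> {y. \<forall>p\<in>P. p (y - x) < e} \<subseteq> S"
    and T: "\<forall>x\<in>T. \<exists>P e. finite P \<and> P \<subseteq> A \<and> e > 0 \<and> {y. \<forall>p\<in>P. p (y - x) < e} \<subseteq> T"
    and x: "x \<in> S \<inter> T"
  have "x \<in> S" "x \<in> T" using x by simp_all
  obtain P e where "finite P" "P \<subseteq> A" "e > 0" "{y. \<forall>p\<in>P. p (y - x) < e} \<subseteq> S"
    using bspec[OF S \<open>x \<in> S\<close>] by (elim exE conjE) (rule that)
  moreover obtain Q d where "finite Q" "Q \<subseteq> A" "d > 0" "{y. \<forall>p\<in>Q. p (y - x) < d} \<subseteq> T"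
    using bspec[OF T \<open>x \<in> T\<close>] by (elim exE conjE) (rule that)
  ultimately show "\<exists>P e. finite P \<and> P \<subseteq> A \<and> e > 0 \<and> {y. \<forall>p\<in>P. p (y - x) < e} \<subseteq> S \<inter> T"
    by (intro exI[of _ "P \<union> Q"] exI[of _ "min e d"]) auto
next
  fix \<U> x
  assume \<U>: "\<forall>U\<in>\<U>. \<forall>x\<in>U. \<exists>P e. finite P \<and> P \<subseteq> A \<and> e > 0 \<and> {y. \<forall>p\<in>P. p (y - x) < e} \<subseteq> U"
    and "x \<in> \<Union>\<U>"
  then obtain U where U: "U \<in> \<U>" "x \<in> U"
    by blast
  obtain P e where "finite P" "P \<subseteq> A" "e > 0" "{y. \<forall>p\<in>P. p (y - x) < e} \<subseteq> U"
    using bspec[OF bspec[OF \<U> U(1)] U(2)] by (elim exE conjE) (rule that)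
  with Union_upper[OF U(1)]
  show "\<exists>P e. finite P \<and> P \<subseteq> A \<and> e > 0 \<and> {y. \<forall>p\<in>P. p (y - x) < e} \<subseteq> \<Union>\<U>"
    by (intro exI[of _ P] exI[of _ e]) simp
qed

lemma openin_semtop:
  "openin (semtop A) U \<longleftrightarrow>
     (\<forall>x\<in>U. \<exists>P e. finite P \<and> P \<subseteq> A \<and> e > 0 \<and> {y. \<forall>p\<in>P. p (y - x) < e} \<subseteq> U)"
  unfolding semtop_def by (simp only: topology_inverse'[OF istopology_semtop])

lemma topspace_semtop [simp]: "topspace (semtop A) = UNIV"
proof -
  have "openin (semtop A) UNIV"
    unfolding openin_semtop by (intro ballI exI[of _ "{}"] exI[of _ 1]) simp
  then show ?thesis
    using openin_subset by blast
qed

lemma openin_semtop_ball: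
  assumes A: "hlcs s A" and P: "finite P" "P \<subseteq> A"
  shows "openin (semtop A) {z. (\<Sum>p\<in>P. p (z - c)) < e}"
  unfolding openin_semtop
proof
  fix x assume "x \<in> {z. (\<Sum>p\<in>P. p (z - c)) < e}"
  then have gap: "e - (\<Sum>p\<in>P. p (x - c)) > 0" by simp
  define d where "d = (e - (\<Sum>p\<in>P. p (x - c))) / (card P + 1)"
  have "(\<Sum>p\<in>P. p (y - c)) < e" if y: "\<forall>p\<in>P. p (y - x) < d" for y
  proof -
    have "(\<Sum>p\<in>P. p (y - c)) \<le> (\<Sum>p\<in>P. d + p (x - c))"
    proof (rule sum_mono)
      fix p assume "p \<in> P"
      then have "p (y - c) \<le> p (y - x) + p (x - c)" "p (y - x) < d"
        using P y seminorm_triangle_diff[OF hlcs_vector_space[OF A] hlcs_seminorm[OF A]] by auto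
      then show "p (y - c) \<le> d + p (x - c)" by linarith
    qed
    also have "\<dots> = card P * d + (\<Sum>p\<in>P. p (x - c))"
      by (simp add: sum.distrib)
    also have "\<dots> < e"
      using gap by (simp add: d_def field_simps)
    finally show ?thesis .
  qed
  moreover have "d > 0" using gap by (simp add: d_def)
  ultimately show "\<exists>Q d. finite Q \<and> Q \<subseteq> A \<and> d > 0 \<and> {y. \<forall>p\<in>Q. p (y - x) < d}
                     \<subseteq> {z. (\<Sum>p\<in>P. p (z - c)) < e}"
    using P by (intro exI[of _ P] exI[of _ d]) auto
qed

lemma openin_seminorm_sublevel:
  assumes "hlcs s A" "finite P" "P \<subseteq> A" "continuous_map X (semtop A) f"
  shows "openin X {x \<in> topspace X. (\<Sum>p\<in>P. p (f x - c)) < e}"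
  using openin_continuous_map_preimage[OF assms(4) openin_semtop_ball[OF assms(1-3)]] by simp

lemma usc_seminorm_comp:
  assumes "hlcs s A" "p \<in> A" "continuous_map X (semtop A) f"
  shows "usc X (\<lambda>x. p (f x))"
  unfolding usc_def using openin_seminorm_sublevel[OF assms(1) _ _ assms(3), of "{p}" 0] assms(2)
  by simp

lemma continuous_map_semtop_iff:
  assumes A: "hlcs s A"
  shows "continuous_map X (semtop A) f \<longleftrightarrow>
           (\<forall>x\<in>topspace X. \<forall>p\<in>A. \<forall>e>0. \<forall>\<^sub>F y in nhdsin X x. p (f y - f x) < e)"
proof (intro iffI ballI allI impI)
  fix x p and e :: real
  assume f: "continuous_map X (semtop A) f" and x: "x \<in> topspace X" and "p \<in> A" "e > 0"
  then have "openin X {y \<in> topspace X. p (f y - f x) < e}" "x \<in> {y \<in> topspace X. p (f y - f x) < e}"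
    using openin_seminorm_sublevel[OF A _ _ f, of "{p}" "f x" e]
    by (simp_all add: seminorm_zero[OF hlcs_vector_space[OF A] hlcs_seminorm[OF A]])
  then show "\<forall>\<^sub>F y in nhdsin X x. p (f y - f x) < e"
    unfolding eventually_nhdsin by blast
next
  assume ev: "\<forall>x\<in>topspace X. \<forall>p\<in>A. \<forall>e>0. \<forall>\<^sub>F y in nhdsin X x. p (f y - f x) < e"
  show "continuous_map X (semtop A) f"
    unfolding continuous_map_def
  proof (intro conjI allI impI)
    fix U assume U: "openin (semtop A) U"
    show "openin X {x \<in> topspace X. f x \<in> U}"
    proof (subst openin_subopen, intro ballI)
      fix x assume x: "x \<in> {x \<in> topspace X. f x \<in> U}"
      obtain P e where P: "finite P" "P \<subseteq> A" "e > 0" "{y. \<forall>p\<in>P. p (y - f x) < e} \<subseteq> U"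
        using U x unfolding openin_semtop by (auto elim!: ballE[of _ _ "f x"])
      have "\<forall>\<^sub>F y in nhdsin X x. \<forall>p\<in>P. p (f y - f x) < e"
      proof (rule eventually_ball_finite[OF P(1)], rule ballI)
        fix p assume "p \<in> P"
        then show "\<forall>\<^sub>F y in nhdsin X x. p (f y - f x) < e"
          using ev[rule_format, of x p e] x P(2,3) by (simp add: subset_iff)
      qed
      then obtain S where S: "openin X S" "x \<in> S" "\<forall>y\<in>S. \<forall>p\<in>P. p (f y - f x) < e"
        using x by (auto simp: eventually_nhdsin)
      have "S \<subseteq> {x \<in> topspace X. f x \<in> U}"
      proof
        fix y assume "y \<in> S"
        then have "f y \<in> {y. \<forall>p\<in>P. p (y - f x) < e}" using S(3) by simp
        then show "y \<in> {x \<in> topspace X. f x \<in> U}"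
          using P(4) openin_subset[OF S(1)] \<open>y \<in> S\<close> by (simp add: subset_iff)
      qed
      then show "\<exists>T. openin X T \<and> x \<in> T \<and> T \<subseteq> {x \<in> topspace X. f x \<in> U}"
        using S(1,2) by blast
    qed
  qed simp
qed

lemma continuous_map_semtopD:
  assumes "hlcs s A" "continuous_map X (semtop A) f" "x \<in> topspace X" "p \<in> A" "e > 0"
  shows "\<forall>\<^sub>F y in nhdsin X x. p (f y - f x) < e"
  using assms by (simp add: continuous_map_semtop_iff)

lemma continuous_map_semtop_add:
  assumes A: "hlcs s A" and "continuous_map X (semtop A) f" "continuous_map X (semtop A) g"
  shows "continuous_map X (semtop A) (\<lambda>x. f x + g x)"
  unfolding continuous_map_semtop_iff[OF A]
proof (intro ballI allI impI)
  fix x p and e :: real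
  assume x: "x \<in> topspace X" and p: "p \<in> A" and "e > 0"
  then have "\<forall>\<^sub>F y in nhdsin X x. p (f y - f x) < e / 2" "\<forall>\<^sub>F y in nhdsin X x. p (g y - g x) < e / 2"
    using continuous_map_semtopD[OF A assms(2) x p, of "e / 2"]
      continuous_map_semtopD[OF A assms(3) x p, of "e / 2"] by simp_all
  then show "\<forall>\<^sub>F y in nhdsin X x. p (f y + g y - (f x + g x)) < e"
  proof eventually_elim
    case (elim y)
    have "p (f y + g y - (f x + g x)) \<le> p (f y - f x) + p (g y - g x)"
      using seminorm_triangle[OF hlcs_vector_space[OF A] hlcs_seminorm[OF A p]]
      by (simp only: add_diff_add)
    with elim show ?case by linarith
  qed
qed

lemma continuous_map_semtop_diff:
  assumes A: "hlcs s A" and "continuous_map X (semtop A) f" "continuous_map X (semtop A) g"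
  shows "continuous_map X (semtop A) (\<lambda>x. f x - g x)"
  unfolding continuous_map_semtop_iff[OF A]
proof (intro ballI allI impI)
  fix x p and e :: real
  assume x: "x \<in> topspace X" and p: "p \<in> A" and "e > 0"
  then have "\<forall>\<^sub>F y in nhdsin X x. p (f y - f x) < e / 2" "\<forall>\<^sub>F y in nhdsin X x. p (g y - g x) < e / 2"
    using continuous_map_semtopD[OF A assms(2) x p, of "e / 2"]
      continuous_map_semtopD[OF A assms(3) x p, of "e / 2"] by simp_all
  then show "\<forall>\<^sub>F y in nhdsin X x. p (f y - g y - (f x - g x)) < e"
  proof eventually_elim
    case (elim y)
    have "f y - g y - (f x - g x) = (f y - f x) - (g y - g x)" by simp
    then have "p (f y - g y - (f x - g x)) \<le> p (f y - f x) + p (g y - g x)"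
      using seminorm_diff_le[OF hlcs_vector_space[OF A] hlcs_seminorm[OF A p]] by metis
    with elim show ?case by linarith
  qed
qed

lemma continuous_map_semtop_scale:
  assumes A: "hlcs s A" and f: "continuous_map X (semtop A) f"
  shows "continuous_map X (semtop A) (\<lambda>x. s c (f x))"
  unfolding continuous_map_semtop_iff[OF A]
proof (intro ballI allI impI)
  interpret vector_space s using hlcs_vector_space[OF A] .
  fix x p and e :: real
  assume x: "x \<in> topspace X" and p: "p \<in> A" and "e > 0"
  then have "\<forall>\<^sub>F y in nhdsin X x. p (f y - f x) < e / (cmod c + 1)"
    using continuous_map_semtopD[OF A f x p, of "e / (cmod c + 1)"] \<open>e > 0\<close>
    by (simp add: add_nonneg_pos)
  then show "\<forall>\<^sub>F y in nhdsin X x. p (s c (f y) - s c (f x)) < e"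
  proof eventually_elim
    case (elim y)
    have pos: "cmod c + 1 > 0" by (simp add: add_nonneg_pos)
    have "cmod c * p (f y - f x) \<le> (cmod c + 1) * p (f y - f x)"
      using seminorm_nonneg[OF hlcs_vector_space[OF A] hlcs_seminorm[OF A p]] by (simp add: distrib_right)
    also have "\<dots> < (cmod c + 1) * (e / (cmod c + 1))"
      using elim pos by (rule mult_strict_left_mono)
    also have "\<dots> = e"
      using pos by simp
    finally show ?case
      by (simp add: seminorm_scale[OF hlcs_vector_space[OF A] hlcs_seminorm[OF A p]]
          flip: scale_right_diff_distrib)
  qed
qed

lemma continuous_map_semtop_scaled_vector:
  assumes A: "hlcs s A" and \<alpha>: "continuous_map X euclideanreal \<alpha>"
  shows "continuous_map X (semtop A) (\<lambda>t. s (complex_of_real (\<alpha> t)) x)"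
  unfolding continuous_map_semtop_iff[OF A]
proof (intro ballI allI impI)
  interpret vector_space s using hlcs_vector_space[OF A] .
  fix t p and e :: real
  assume t: "t \<in> topspace X" and p: "p \<in> A" and "e > 0"
  note sn = seminorm_nonneg[OF hlcs_vector_space[OF A] hlcs_seminorm[OF A p], of x]
  define d where "d = e / (p x + 1)"
  have "d > 0"
    using \<open>e > 0\<close> sn by (simp add: d_def add_nonneg_pos)
  then have "openin X {y \<in> topspace X. \<alpha> y \<in> ball (\<alpha> t) d}" "t \<in> {y \<in> topspace X. \<alpha> y \<in> ball (\<alpha> t) d}"
    using openin_continuous_map_preimage[OF \<alpha>, of "ball (\<alpha> t) d"] t by simp_all
  then have "\<forall>\<^sub>F y in nhdsin X t. \<bar>\<alpha> y - \<alpha> t\<bar> < d"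
    unfolding eventually_nhdsin by (intro disjI2 exI[of _ "{y \<in> topspace X. \<alpha> y \<in> ball (\<alpha> t) d}"])
      (auto simp: dist_real_def abs_minus_commute)
  then show "\<forall>\<^sub>F y in nhdsin X t. p (s (complex_of_real (\<alpha> y)) x - s (complex_of_real (\<alpha> t)) x) < e"
  proof eventually_elim
    case (elim y)
    have "p (s (complex_of_real (\<alpha> y)) x - s (complex_of_real (\<alpha> t)) x) = \<bar>\<alpha> y - \<alpha> t\<bar> * p x"
      using seminorm_scale_real[OF hlcs_vector_space[OF A] hlcs_seminorm[OF A p]]
      by (simp flip: scale_left_diff_distrib of_real_diff)
    also have "\<dots> \<le> \<bar>\<alpha> y - \<alpha> t\<bar> * (p x + 1)"
      by (simp add: mult_left_mono)
    also have "\<dots> < d * (p x + 1)"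
      using elim sn by (intro mult_strict_right_mono) auto
    also have "\<dots> = e"
      using sn by (simp add: d_def)
    finally show ?case .
  qed
qed

definition function_subspace :: "(complex \<Rightarrow> 'z \<Rightarrow> 'z) \<Rightarrow> ('a \<Rightarrow> 'z::ab_group_add) set \<Rightarrow> bool"
  where "function_subspace s M \<longleftrightarrow>
    (\<lambda>u. 0) \<in> M \<and> (\<forall>f\<in>M. \<forall>g\<in>M. (\<lambda>u. f u + g u) \<in> M) \<and> (\<forall>c. \<forall>f\<in>M. (\<lambda>u. s c (f u)) \<in> M)"

lemma function_subspace_Cfun:
  assumes A: "hlcs s A"
  shows "function_subspace s (Cfun X A)"
proof -
  interpret vector_space s using hlcs_vector_space[OF A] .
  show ?thesis
    unfolding function_subspace_def Cfun_def
    by (auto intro: continuous_map_semtop_add[OF A] continuous_map_semtop_scale[OF A])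
qed

section \<open>Tensor spans\<close>

lemma tensor_spanI:
  assumes "\<forall>k<n. f k \<in> W \<and> g k \<in> V"
  shows "(\<lambda>u. \<Sum>k<(n::nat). sZ (c k) (tensor_fun tp (f k) (g k) u)) \<in> tensor_span sZ tp W V"
  unfolding tensor_span_def mem_Collect_eq
  using assms by (intro exI[of _ n] exI[of _ c] exI[of _ f] exI[of _ g]) simp

lemma tensor_spanE:
  assumes "w \<in> tensor_span sZ tp W V"
  obtains n c f g where "w = (\<lambda>u. \<Sum>k<(n::nat). sZ (c k) (tensor_fun tp (f k) (g k) u))"
    "\<forall>k<n. f k \<in> W \<and> g k \<in> V"
  using assms unfolding tensor_span_def by blast

lemma tensor_span_mono:
  assumes "W \<subseteq> W'" "V \<subseteq> V'"
  shows "tensor_span sZ tp W V \<subseteq> tensor_span sZ tp W' V'"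
proof
  fix w assume "w \<in> tensor_span sZ tp W V"
  then obtain n c f g where "w = (\<lambda>u. \<Sum>k<(n::nat). sZ (c k) (tensor_fun tp (f k) (g k) u))"
    "\<forall>k<n. f k \<in> W \<and> g k \<in> V"
    by (rule tensor_spanE)
  with assms show "w \<in> tensor_span sZ tp W' V'"
    by (simp add: subset_iff tensor_spanI)
qed

lemma tensor_span_zero: "(\<lambda>u. 0) \<in> tensor_span sZ tp W V"
  using tensor_spanI[of "0::nat"] by simp

lemma sum_lessThan_add: "(\<Sum>k<m + (n::nat). f k) = (\<Sum>k<m. f k) + (\<Sum>k<n. f (m + k))"
  by (induction n) (simp_all add: add.assoc)

lemma tensor_span_add:
  assumes "w1 \<in> tensor_span sZ tp W V" "w2 \<in> tensor_span sZ tp W V"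
  shows "(\<lambda>u. w1 u + w2 u) \<in> tensor_span sZ tp W V"
proof -
  obtain n1 c1 f1 g1 where w1: "w1 = (\<lambda>u. \<Sum>k<(n1::nat). sZ (c1 k) (tensor_fun tp (f1 k) (g1 k) u))"
    and fg1: "\<forall>k<n1. f1 k \<in> W \<and> g1 k \<in> V"
    using assms(1) by (rule tensor_spanE)
  obtain n2 c2 f2 g2 where w2: "w2 = (\<lambda>u. \<Sum>k<(n2::nat). sZ (c2 k) (tensor_fun tp (f2 k) (g2 k) u))"
    and fg2: "\<forall>k<n2. f2 k \<in> W \<and> g2 k \<in> V"
    using assms(2) by (rule tensor_spanE)
  define c where "c k = (if k < n1 then c1 k else c2 (k - n1))" for k
  define f where "f k = (if k < n1 then f1 k else f2 (k - n1))" for k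
  define g where "g k = (if k < n1 then g1 k else g2 (k - n1))" for k
  have "(\<lambda>u. w1 u + w2 u) = (\<lambda>u. \<Sum>k<n1 + n2. sZ (c k) (tensor_fun tp (f k) (g k) u))"
    unfolding w1 w2 sum_lessThan_add by (simp add: c_def f_def g_def)
  also have "\<dots> \<in> tensor_span sZ tp W V"
    using fg1 fg2 by (intro tensor_spanI) (simp add: c_def f_def g_def)
  finally show ?thesis .
qed

lemma tensor_span_sum:
  assumes "finite T" "\<And>i. i \<in> T \<Longrightarrow> w i \<in> tensor_span sZ tp W V"
  shows "(\<lambda>u. \<Sum>i\<in>T. w i u) \<in> tensor_span sZ tp W V"
  using assms by (induction T rule: finite_induct) (simp_all add: tensor_span_zero tensor_span_add)

lemma tensor_span_subset:
  assumes S: "function_subspace sZ S" and tensor: "\<And>f g. f \<in> W \<Longrightarrow> g \<in> V \<Longrightarrow> tensor_fun tp f g \<in> S"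
  shows "tensor_span sZ tp W V \<subseteq> S"
proof
  fix w assume "w \<in> tensor_span sZ tp W V"
  then obtain n c f g where w: "w = (\<lambda>u. \<Sum>k<(n::nat). sZ (c k) (tensor_fun tp (f k) (g k) u))"
    and fg: "\<forall>k<n. f k \<in> W \<and> g k \<in> V"
    by (rule tensor_spanE)
  have "m \<le> n \<Longrightarrow> (\<lambda>u. \<Sum>k<m. sZ (c k) (tensor_fun tp (f k) (g k) u)) \<in> S" for m
    using S fg tensor by (induction m) (simp_all add: function_subspace_def)
  then show "w \<in> S"
    unfolding w by simp
qed

context
  fixes sX :: "complex \<Rightarrow> 'x::ab_group_add \<Rightarrow> 'x"
    and sY :: "complex \<Rightarrow> 'y::ab_group_add \<Rightarrow> 'y"
    and sZ :: "complex \<Rightarrow> 'z::ab_group_add \<Rightarrow> 'z"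
    and tp :: "'x \<Rightarrow> 'y \<Rightarrow> 'z"
  assumes tensor: "alg_tensor sX sY sZ tp"
begin

lemma alg_tensor_linear: "Vector_Spaces.linear sX sZ (\<lambda>x. tp x y)" "Vector_Spaces.linear sY sZ (tp x)"
  using tensor by (simp_all add: alg_tensor_def)

lemma alg_tensor_vector_spaces: "vector_space sX" "vector_space sY" "vector_space sZ"
  using alg_tensor_linear by (simp_all add: Vector_Spaces.linear_iff)

lemma alg_tensor_zero [simp]: "tp 0 y = 0" "tp x 0 = 0"
  using vector_space_pair.linear_0[OF _ alg_tensor_linear(1)]
    vector_space_pair.linear_0[OF _ alg_tensor_linear(2)]
  by (simp_all add: vector_space_pair_def alg_tensor_vector_spaces)

lemma alg_tensor_scale: "tp (sX a x) (sY b y) = sZ (a * b) (tp x y)"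
proof -
  interpret vector_space sZ by (fact alg_tensor_vector_spaces)
  show ?thesis
    using vector_space_pair.linear_scale[OF _ alg_tensor_linear(1)]
      vector_space_pair.linear_scale[OF _ alg_tensor_linear(2)]
    by (simp add: vector_space_pair_def alg_tensor_vector_spaces mult.commute)
qed

lemma alg_tensor_sum_representation:
  obtains n c xs ys where "z = (\<Sum>k<(n::nat). sZ (c k) (tp (xs k) (ys k)))"
proof -
  interpret vector_space sZ by (fact alg_tensor_vector_spaces)
  have "z \<in> span {tp x y | x y. True}"
    using tensor by (simp add: alg_tensor_def)
  then obtain T r where T: "finite T" "T \<subseteq> {tp x y | x y. True}" and z: "z = (\<Sum>a\<in>T. sZ (r a) a)"
    by (auto simp: span_explicit)
  obtain h where h: "bij_betw h {..<card T} T"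
    using ex_bij_betw_nat_finite[OF T(1)] by (auto simp: atLeast0LessThan)
  obtain x y where xy: "\<And>a. a \<in> T \<Longrightarrow> a = tp (x a) (y a)"
    using T(2) by (simp add: subset_iff) metis
  have "z = (\<Sum>k<card T. sZ (r (h k)) (h k))"
    unfolding z using sum.reindex_bij_betw[OF h, of "\<lambda>a. sZ (r a) a"] by simp
  also have "\<dots> = (\<Sum>k<card T. sZ (r (h k)) (tp (x (h k)) (y (h k))))"
    using xy bij_betwE[OF h] by (intro sum.cong) auto
  finally show ?thesis by (rule that)
qed

lemma tensor_fun_in_Cfun:
  assumes cont: "continuous_map (prod_topology (semtop AX) (semtop AY)) (semtop AZ) (\<lambda>(x, y). tp x y)"
    and f: "f \<in> Cfun I AX" and g: "g \<in> Cfun J AY"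
  shows "tensor_fun tp f g \<in> Cfun (prod_topology I J) AZ"
proof -
  have "tensor_fun tp f g = (\<lambda>(x, y). tp x y) \<circ> (\<lambda>(t, s). (f t, g s))"
    by (simp add: tensor_fun_def fun_eq_iff)
  moreover have "continuous_map (prod_topology I J) (prod_topology (semtop AX) (semtop AY))
      (\<lambda>(t, s). (f t, g s))"
    using f g by (simp add: Cfun_def continuous_map_prod_top)
  moreover have "tensor_fun tp f g (t, s) = 0" if "(t, s) \<notin> topspace (prod_topology I J)" for t s
    using that f g by (auto simp: Cfun_def tensor_fun_def alg_tensor_zero)
  ultimately show ?thesis
    unfolding Cfun_def using continuous_map_compose[OF _ cont] by auto
qed

lemma scaled_vector_in_tensor_span:
  assumes "\<And>x. (\<lambda>t. sX (complex_of_real (\<alpha> t)) x) \<in> W"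
    and "\<And>y. (\<lambda>s. sY (complex_of_real (\<beta> s)) y) \<in> V"
  shows "(\<lambda>u. sZ (complex_of_real (\<alpha> (fst u) * \<beta> (snd u))) z) \<in> tensor_span sZ tp W V"
proof -
  interpret vector_space sZ by (fact alg_tensor_vector_spaces)
  obtain n c xs ys where z: "z = (\<Sum>k<(n::nat). sZ (c k) (tp (xs k) (ys k)))"
    by (rule alg_tensor_sum_representation)
  have "(\<lambda>u. sZ (complex_of_real (\<alpha> (fst u) * \<beta> (snd u))) z) = (\<lambda>u. \<Sum>k<n. sZ (c k)
      (tensor_fun tp (\<lambda>t. sX (complex_of_real (\<alpha> t)) (xs k)) (\<lambda>s. sY (complex_of_real (\<beta> s)) (ys k)) u))"
    by (auto simp: z tensor_fun_def alg_tensor_scale scale_sum_right mult.commute)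
  also have "\<dots> \<in> tensor_span sZ tp W V"
    using assms by (intro tensor_spanI) simp
  finally show ?thesis .
qed

lemma tensor_span_product_sum:
  assumes T: "finite T1" "finite T2"
    and \<alpha>: "\<And>i x. i \<in> T1 \<Longrightarrow> (\<lambda>t. sX (complex_of_real (\<alpha> i t)) x) \<in> W"
    and \<beta>: "\<And>j y. j \<in> T2 \<Longrightarrow> (\<lambda>s. sY (complex_of_real (\<beta> j s)) y) \<in> V"
  shows "(\<lambda>u. \<Sum>k\<in>T1 \<times> T2. sZ (complex_of_real (\<alpha> (fst k) (fst u) * \<beta> (snd k) (snd u))) (z k))
           \<in> tensor_span sZ tp W V"
  using T \<alpha> \<beta> by (intro tensor_span_sum scaled_vector_in_tensor_span) (auto simp: mem_Times_iff)

end

section \<open>Bounded functions and functions vanishing at infinity\<close>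

definition cocompact :: "'a topology \<Rightarrow> 'a filter"
  where "cocompact X = (INF C\<in>{C. compactin X C}. principal (topspace X - C))"

lemma eventually_cocompact:
  "eventually P (cocompact X) \<longleftrightarrow> (\<exists>C. compactin X C \<and> (\<forall>x\<in>topspace X - C. P x))"
  unfolding cocompact_def
proof (subst eventually_INF_base)
  show "{C. compactin X C} \<noteq> {}"
    using compactin_empty by blast
  show "\<exists>C\<in>{C. compactin X C}. principal (topspace X - C) \<le>
          inf (principal (topspace X - C1)) (principal (topspace X - C2))"
    if "C1 \<in> {C. compactin X C}" "C2 \<in> {C. compactin X C}" for C1 C2
    using that by (intro bexI[of _ "C1 \<union> C2"]) (auto intro: compactin_Un)
qed (auto simp: eventually_principal)

lemma eventually_in_topspace_cocompact: "\<forall>\<^sub>F x in cocompact X. x \<in> topspace X"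
  unfolding eventually_cocompact by (intro exI[of _ "{}"]) simp

lemma eventually_cocompact_prod:
  assumes "eventually P (cocompact I)" "eventually Q (cocompact J)"
  shows "\<forall>\<^sub>F u in cocompact (prod_topology I J). P (fst u) \<or> Q (snd u)"
proof -
  obtain C1 C2 where "compactin I C1" "\<forall>t\<in>topspace I - C1. P t"
    and "compactin J C2" "\<forall>s\<in>topspace J - C2. Q s"
    using assms by (auto simp: eventually_cocompact)
  then show ?thesis
    unfolding eventually_cocompact
    by (intro exI[of _ "C1 \<times> C2"]) (auto simp: compactin_Times)
qed

lemma tendsto_cocompact_prod_mult:
  fixes a :: "'i \<Rightarrow> real" and b :: "'j \<Rightarrow> real"
  assumes a: "(a \<longlongrightarrow> 0) (cocompact I)" "\<And>t. t \<in> topspace I \<Longrightarrow> \<bar>a t\<bar> \<le> M"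
    and b: "(b \<longlongrightarrow> 0) (cocompact J)" "\<And>s. s \<in> topspace J \<Longrightarrow> \<bar>b s\<bar> \<le> M"
  shows "((\<lambda>u. a (fst u) * b (snd u)) \<longlongrightarrow> 0) (cocompact (prod_topology I J))"
  unfolding tendsto_iff dist_real_def
proof (intro allI impI)
  fix e :: real assume "e > 0"
  define \<delta> where "\<delta> = e / (\<bar>M\<bar> + 1)"
  have "\<delta> > 0" using \<open>e > 0\<close> by (simp add: \<delta>_def)
  then have "\<forall>\<^sub>F t in cocompact I. \<bar>a t\<bar> < \<delta>" "\<forall>\<^sub>F s in cocompact J. \<bar>b s\<bar> < \<delta>"
    using a(1) b(1) by (auto simp: tendsto_iff dist_real_def)
  then have "\<forall>\<^sub>F u in cocompact (prod_topology I J). \<bar>a (fst u)\<bar> < \<delta> \<or> \<bar>b (snd u)\<bar> < \<delta>"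
    by (rule eventually_cocompact_prod)
  with eventually_in_topspace_cocompact
  show "\<forall>\<^sub>F u in cocompact (prod_topology I J). \<bar>a (fst u) * b (snd u) - 0\<bar> < e"
  proof eventually_elim
    case (elim u)
    have "\<bar>a (fst u)\<bar> \<le> \<bar>M\<bar>" "\<bar>b (snd u)\<bar> \<le> \<bar>M\<bar>"
      using elim(1) a(2)[of "fst u"] b(2)[of "snd u"] by (auto simp: mem_Times_iff)
    from elim(2) have "\<bar>a (fst u)\<bar> * \<bar>b (snd u)\<bar> \<le> \<delta> * \<bar>M\<bar>"
    proof
      assume "\<bar>a (fst u)\<bar> < \<delta>"
      with \<open>\<bar>b (snd u)\<bar> \<le> \<bar>M\<bar>\<close> show ?thesis by (intro mult_mono) auto
    next
      assume "\<bar>b (snd u)\<bar> < \<delta>"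
      with \<open>\<bar>a (fst u)\<bar> \<le> \<bar>M\<bar>\<close> have "\<bar>b (snd u)\<bar> * \<bar>a (fst u)\<bar> \<le> \<delta> * \<bar>M\<bar>"
        by (intro mult_mono) auto
      then show ?thesis by (simp add: mult.commute)
    qed
    then have "\<bar>a (fst u) * b (snd u)\<bar> \<le> \<delta> * \<bar>M\<bar>"
      by (simp add: abs_mult)
    also have "\<dots> < e"
      using \<open>e > 0\<close> by (simp add: \<delta>_def field_simps)
    finally show ?case by simp
  qed
qed

lemma usc_bounded_above_on_compact:
  assumes "usc X h" "compactin X C"
  shows "\<exists>M. \<forall>x\<in>C. h x \<le> M"
proof -
  define U where "U n = {x \<in> topspace X. h x < real n}" for n
  have "\<forall>V\<in>range U. openin X V"
    using assms(1) by (simp add: usc_def U_def)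
  moreover have "C \<subseteq> \<Union>(range U)"
    using compactin_subset_topspace[OF assms(2)] reals_Archimedean2 by (fastforce simp: U_def)
  ultimately obtain F where "finite F" "F \<subseteq> range U" "C \<subseteq> \<Union>F"
    using assms(2) unfolding compactin_def by meson
  then obtain N where N: "finite N" "C \<subseteq> (\<Union>n\<in>N. U n)"
    by (metis finite_subset_image)
  show ?thesis
  proof (intro exI ballI)
    fix x assume "x \<in> C"
    then obtain n where "n \<in> N" "h x < real n"
      using N(2) by (auto simp: U_def)
    then show "h x \<le> (\<Sum>n\<in>N. real n)"
      using member_le_sum[OF \<open>n \<in> N\<close> _ N(1), of real] by simp
  qed
qed

lemma usc_bounded_above_cocompact:
  assumes "usc X h" "\<forall>\<^sub>F x in cocompact X. h x \<le> B"
  shows "\<exists>M. \<forall>x\<in>topspace X. h x \<le> M"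
proof -
  obtain C where C: "compactin X C" "\<forall>x\<in>topspace X - C. h x \<le> B"
    using assms(2) by (auto simp: eventually_cocompact)
  obtain M where "\<forall>x\<in>C. h x \<le> M"
    using usc_bounded_above_on_compact[OF assms(1) C(1)] by blast
  with C(2) show ?thesis
    by (intro exI[of _ "max M B"]) (force simp: le_max_iff_disj)
qed

lemma vanishes_at_infinity_iff_cocompact:
  assumes "Hausdorff_space X"
  shows "vanishes_at_infinity X A g \<longleftrightarrow> (\<forall>p\<in>A. \<forall>e>0. \<forall>\<^sub>F x in cocompact X. p (g x) < e)"
proof -
  have "compactin X (X closure_of {x \<in> topspace X. p (g x) \<ge> e}) \<longleftrightarrow>
          (\<forall>\<^sub>F x in cocompact X. p (g x) < e)" for p and e :: real
  proof
    let ?S = "{x \<in> topspace X. p (g x) \<ge> e}"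
    assume "compactin X (X closure_of ?S)"
    moreover have "?S \<subseteq> X closure_of ?S"
      by (rule closure_of_subset) auto
    ultimately show "\<forall>\<^sub>F x in cocompact X. p (g x) < e"
      unfolding eventually_cocompact by (intro exI[of _ "X closure_of ?S"]) (auto simp: subset_iff)
  next
    let ?S = "{x \<in> topspace X. p (g x) \<ge> e}"
    assume "\<forall>\<^sub>F x in cocompact X. p (g x) < e"
    then obtain C where C: "compactin X C" "\<forall>x\<in>topspace X - C. p (g x) < e"
      unfolding eventually_cocompact by blast
    then have "?S \<subseteq> C"
      by (auto simp: not_le[symmetric])
    then have "X closure_of ?S \<subseteq> C"
      by (intro closure_of_minimal compactin_imp_closedin[OF assms C(1)])
    then show "compactin X (X closure_of ?S)"
      by (rule closed_compactin[OF C(1) _ closedin_closure_of])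
  qed
  then show ?thesis
    unfolding vanishes_at_infinity_def by simp
qed

lemma C0fun_iff:
  assumes "Hausdorff_space X" and A: "hlcs s A"
  shows "f \<in> C0fun X A \<longleftrightarrow> f \<in> Cfun X A \<and> (\<forall>p\<in>A. ((\<lambda>x. p (f x)) \<longlongrightarrow> 0) (cocompact X))"
proof -
  have "((\<lambda>x. p (f x)) \<longlongrightarrow> 0) (cocompact X) \<longleftrightarrow> (\<forall>e>0. \<forall>\<^sub>F x in cocompact X. p (f x) < e)"
    if "p \<in> A" for p
  proof -
    have "\<forall>\<^sub>F x in cocompact X. l < p (f x)" if "l < 0" for l
      using \<open>l < 0\<close> seminorm_nonneg[OF hlcs_vector_space[OF A] hlcs_seminorm[OF A \<open>p \<in> A\<close>]]
      by (intro always_eventually allI) (rule less_le_trans)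
    then show ?thesis
      by (simp add: order_tendsto_iff)
  qed
  then show ?thesis
    unfolding C0fun_def vanishes_at_infinity_iff_cocompact[OF assms(1)] by simp
qed

lemma function_subspace_Cbfun:
  assumes A: "hlcs s A"
  shows "function_subspace s (Cbfun X A)"
proof -
  have Cfun: "function_subspace s (Cfun X A)"
    by (rule function_subspace_Cfun[OF A])
  have "(\<lambda>u. f u + g u) \<in> Cbfun X A" if "f \<in> Cbfun X A" "g \<in> Cbfun X A" for f g
  proof -
    have "\<exists>M. \<forall>x\<in>topspace X. p (f x + g x) \<le> M" if p: "p \<in> A" for p
    proof -
      obtain M1 where M1: "\<forall>x\<in>topspace X. p (f x) \<le> M1"
        using \<open>f \<in> Cbfun X A\<close> p by (auto simp: Cbfun_def)
      obtain M2 where M2: "\<forall>x\<in>topspace X. p (g x) \<le> M2"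
        using \<open>g \<in> Cbfun X A\<close> p by (auto simp: Cbfun_def)
      show ?thesis
      proof (intro exI[of _ "M1 + M2"] ballI)
        fix x assume "x \<in> topspace X"
        then have "p (f x) \<le> M1" "p (g x) \<le> M2"
          using M1 M2 by auto
        then show "p (f x + g x) \<le> M1 + M2"
          using seminorm_triangle[OF hlcs_vector_space[OF A] hlcs_seminorm[OF A p], of "f x" "g x"]
          by linarith
      qed
    qed
    then show ?thesis
      using that Cfun by (simp add: Cbfun_def function_subspace_def)
  qed
  moreover have "(\<lambda>u. s c (f u)) \<in> Cbfun X A" if "f \<in> Cbfun X A" for f c
  proof -
    have "\<exists>M. \<forall>x\<in>topspace X. p (s c (f x)) \<le> M" if p: "p \<in> A" for p
    proof -
      obtain M where "\<forall>x\<in>topspace X. p (f x) \<le> M"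
        using \<open>f \<in> Cbfun X A\<close> p by (auto simp: Cbfun_def)
      then show ?thesis
        using seminorm_scale[OF hlcs_vector_space[OF A] hlcs_seminorm[OF A p]]
        by (intro exI[of _ "cmod c * M"]) (simp add: mult_left_mono)
    qed
    then show ?thesis
      using that Cfun by (simp add: Cbfun_def function_subspace_def)
  qed
  moreover have "(\<lambda>u. 0) \<in> Cbfun X A"
    using Cfun seminorm_zero[OF hlcs_vector_space[OF A] hlcs_seminorm[OF A]]
    by (auto simp: Cbfun_def function_subspace_def)
  ultimately show ?thesis
    by (simp add: function_subspace_def)
qed

lemma function_subspace_C0fun:
  assumes H: "Hausdorff_space X" and A: "hlcs s A"
  shows "function_subspace s (C0fun X A)"
proof -
  have Cfun: "function_subspace s (Cfun X A)"
    by (rule function_subspace_Cfun[OF A])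
  have "(\<lambda>u. f u + g u) \<in> C0fun X A" if f: "f \<in> C0fun X A" and g: "g \<in> C0fun X A" for f g
  proof -
    have "((\<lambda>x. p (f x + g x)) \<longlongrightarrow> 0) (cocompact X)" if p: "p \<in> A" for p
    proof (rule Lim_null_comparison)
      show "((\<lambda>x. p (f x) + p (g x)) \<longlongrightarrow> 0) (cocompact X)"
        using f g p by (intro tendsto_add_zero) (simp_all add: C0fun_iff[OF H A])
      show "\<forall>\<^sub>F x in cocompact X. norm (p (f x + g x)) \<le> p (f x) + p (g x)"
        using seminorm_triangle[OF hlcs_vector_space[OF A] hlcs_seminorm[OF A p]]
          seminorm_nonneg[OF hlcs_vector_space[OF A] hlcs_seminorm[OF A p]]
        by (intro always_eventually allI) simp
    qed
    with f g Cfun show ?thesis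
      by (simp add: C0fun_iff[OF H A] function_subspace_def)
  qed
  moreover have "(\<lambda>u. s c (f u)) \<in> C0fun X A" if f: "f \<in> C0fun X A" for f c
  proof -
    have "((\<lambda>x. p (s c (f x))) \<longlongrightarrow> 0) (cocompact X)" if p: "p \<in> A" for p
      using f p tendsto_mult_right_zero[of "\<lambda>x. p (f x)" "cocompact X" "cmod c"]
      by (simp add: C0fun_iff[OF H A] seminorm_scale[OF hlcs_vector_space[OF A] hlcs_seminorm[OF A p]])
    with f Cfun show ?thesis
      by (simp add: C0fun_iff[OF H A] function_subspace_def)
  qed
  moreover have "(\<lambda>u. 0) \<in> C0fun X A"
  proof -
    have "((\<lambda>x. p 0) \<longlongrightarrow> 0) (cocompact X)" if "p \<in> A" for p
      using seminorm_zero[OF hlcs_vector_space[OF A] hlcs_seminorm[OF A that]] by simp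
    then show ?thesis
      using Cfun by (simp add: C0fun_iff[OF H A] function_subspace_def)
  qed
  ultimately show ?thesis
    by (simp add: function_subspace_def)
qed

lemma C0fun_subset_Cbfun:
  assumes H: "Hausdorff_space X" and A: "hlcs s A"
  shows "C0fun X A \<subseteq> Cbfun X A"
proof
  fix f assume f: "f \<in> C0fun X A"
  have "\<exists>M. \<forall>x\<in>topspace X. p (f x) \<le> M" if p: "p \<in> A" for p
  proof (rule usc_bounded_above_cocompact)
    show "usc X (\<lambda>x. p (f x))"
      using f by (intro usc_seminorm_comp[OF A p]) (simp add: C0fun_def Cfun_def)
    have "((\<lambda>x. p (f x)) \<longlongrightarrow> 0) (cocompact X)"
      using f p by (simp add: C0fun_iff[OF H A])
    then have "\<forall>\<^sub>F x in cocompact X. p (f x) < 1"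
      by (rule order_tendstoD(2)) simp
    then show "\<forall>\<^sub>F x in cocompact X. p (f x) \<le> 1"
      by (rule eventually_mono) simp
  qed
  then show "f \<in> Cbfun X A"
    using f by (simp add: C0fun_def Cbfun_def)
qed

lemma bounded_above_finite_family:
  assumes "finite Q" "\<forall>k\<in>Q. \<exists>M. \<forall>x\<in>S. h k x \<le> (M::real)"
  shows "\<exists>M. \<forall>k\<in>Q. \<forall>x\<in>S. h k x \<le> M"
proof -
  obtain M where M: "\<forall>k\<in>Q. \<forall>x\<in>S. h k x \<le> M k"
    using bchoice[of Q "\<lambda>k M. \<forall>x\<in>S. h k x \<le> M"] assms(2) by blast
  show ?thesis
  proof (intro exI[of _ "\<Sum>k\<in>Q. \<bar>M k\<bar>"] ballI)
    fix k x assume "k \<in> Q" "x \<in> S"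
    then have "h k x \<le> M k"
      using M by blast
    moreover have "M k \<le> (\<Sum>k\<in>Q. \<bar>M k\<bar>)"
      using member_le_sum[OF \<open>k \<in> Q\<close> _ assms(1), of "\<lambda>k. \<bar>M k\<bar>"] by simp
    ultimately show "h k x \<le> (\<Sum>k\<in>Q. \<bar>M k\<bar>)"
      by linarith
  qed
qed

lemma Cbfun_seminorm_sum_bounded:
  assumes "f \<in> Cbfun X A" "finite P" "P \<subseteq> A"
  shows "\<exists>M. \<forall>x\<in>topspace X. (\<Sum>q\<in>P. q (f x)) \<le> M"
proof -
  have bounded: "\<forall>q\<in>P. \<exists>M. \<forall>x\<in>topspace X. q (f x) \<le> M"
    using assms(1,3) by (auto simp: Cbfun_def)
  obtain M where M: "\<forall>q\<in>P. \<forall>x\<in>topspace X. q (f x) \<le> M"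
    using bounded_above_finite_family[OF assms(2) bounded] by (elim exE) (rule that)
  show ?thesis
  proof (intro exI[of _ "\<Sum>q\<in>P. M"] ballI sum_mono)
    fix x q assume "x \<in> topspace X" "q \<in> P"
    then show "q (f x) \<le> M"
      using M by blast
  qed
qed


lemma le_of_forall_pos_lt_product:
  fixes P u v :: real
  assumes "\<And>\<epsilon>. \<epsilon> > 0 \<Longrightarrow> P < (u + \<epsilon>) * (v + \<epsilon>)"
  shows "P \<le> u * v"
proof -
  have "((\<lambda>\<epsilon>. (u + \<epsilon>) * (v + \<epsilon>)) \<longlongrightarrow> (u + 0) * (v + 0)) (at_right 0)"
    by (intro tendsto_intros)
  moreover have "\<forall>\<^sub>F \<epsilon> in at_right 0. P \<le> (u + \<epsilon>) * (v + \<epsilon>)"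
    using eventually_at_right_less[of "0::real"]
    by (rule eventually_mono) (use assms in \<open>auto intro: less_imp_le\<close>)
  ultimately show ?thesis
    by (simp add: tendsto_lowerbound)
qed

lemma tensor_fun_apply: "tensor_fun tp f g u = tp (f (fst u)) (g (snd u))"
  by (simp add: tensor_fun_def case_prod_beta)

context
  fixes sX :: "complex \<Rightarrow> 'x::ab_group_add \<Rightarrow> 'x" and AX :: "('x \<Rightarrow> real) set"
    and sY :: "complex \<Rightarrow> 'y::ab_group_add \<Rightarrow> 'y" and AY :: "('y \<Rightarrow> real) set"
    and sZ :: "complex \<Rightarrow> 'z::ab_group_add \<Rightarrow> 'z" and AZ :: "('z \<Rightarrow> real) set"
    and tp :: "'x \<Rightarrow> 'y \<Rightarrow> 'z"
  assumes X: "hlcs sX AX" and Y: "hlcs sY AY" and Z: "hlcs sZ AZ"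
    and tensor: "alg_tensor sX sY sZ tp"
    and cont: "continuous_map (prod_topology (semtop AX) (semtop AY)) (semtop AZ) (\<lambda>(x, y). tp x y)"
begin

lemma tensor_small_near_zero:
  assumes p: "p \<in> AZ"
  obtains P1 d1 P2 d2 where "finite P1" "P1 \<subseteq> AX" "d1 > 0" "finite P2" "P2 \<subseteq> AY" "d2 > 0"
    "\<And>x y. \<forall>q\<in>P1. q (x - 0) < d1 \<Longrightarrow> \<forall>q\<in>P2. q (y - 0) < d2 \<Longrightarrow> p (tp x y) < 1"
proof -
  have S: "openin (prod_topology (semtop AX) (semtop AY)) {(x, y). p (tp x y) < 1}"
    using openin_continuous_map_preimage[OF cont openin_semtop_ball[OF Z, of "{p}" 0 1]] p
    by (simp add: case_prod_unfold)
  have zero: "(0, 0) \<in> {(x, y). p (tp x y) < 1}"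
    using seminorm_zero[OF hlcs_vector_space[OF Z] hlcs_seminorm[OF Z p]]
    by (simp add: alg_tensor_zero[OF tensor])
  obtain U V where UV: "openin (semtop AX) U" "openin (semtop AY) V" "0 \<in> U" "0 \<in> V"
    "U \<times> V \<subseteq> {(x, y). p (tp x y) < 1}"
    using openin_prod_topology_alt[THEN iffD1, OF S, rule_format, OF zero]
    by (elim exE conjE) (rule that)
  obtain P1 d1 where P1: "finite P1" "P1 \<subseteq> AX" "d1 > 0" "{x. \<forall>q\<in>P1. q (x - 0) < d1} \<subseteq> U"
    using UV(1,3) unfolding openin_semtop by (auto elim!: ballE[of _ _ 0])
  obtain P2 d2 where P2: "finite P2" "P2 \<subseteq> AY" "d2 > 0" "{y. \<forall>q\<in>P2. q (y - 0) < d2} \<subseteq> V"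
    using UV(2,4) unfolding openin_semtop by (auto elim!: ballE[of _ _ 0])
  show ?thesis
  proof (rule that[OF P1(1-3) P2(1-3)])
    fix x y assume "\<forall>q\<in>P1. q (x - 0) < d1" "\<forall>q\<in>P2. q (y - 0) < d2"
    then have "x \<in> U" "y \<in> V"
      using P1(4) P2(4) by auto
    then show "p (tp x y) < 1"
      using UV(5) by auto
  qed
qed

lemma seminorm_tensor_bound:
  assumes p: "p \<in> AZ"
  obtains P1 P2 C where "finite P1" "P1 \<subseteq> AX" "finite P2" "P2 \<subseteq> AY" "C \<ge> 0"
    "\<And>x y. p (tp x y) \<le> C * (\<Sum>q\<in>P1. q x) * (\<Sum>q\<in>P2. q y)"
proof -
  obtain P1 d1 P2 d2 where P1: "finite P1" "P1 \<subseteq> AX" "d1 > 0" and P2: "finite P2" "P2 \<subseteq> AY" "d2 > 0"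
    and small: "\<And>x y. \<forall>q\<in>P1. q (x - 0) < d1 \<Longrightarrow> \<forall>q\<in>P2. q (y - 0) < d2 \<Longrightarrow> p (tp x y) < 1"
    by (rule tensor_small_near_zero[OF p]) (rule that)
  \<comment> \<open>Rescale \<open>x\<close> and \<open>y\<close> into the region where \<open>p (tp x y) < 1\<close>; the slack \<open>\<epsilon>\<close> also covers
      vectors of seminorm \<open>0\<close>, and it disappears in the limit.\<close>
  have "p (tp x y) * (d1 * d2) < ((\<Sum>q\<in>P1. q x) + \<epsilon>) * ((\<Sum>q\<in>P2. q y) + \<epsilon>)"
    if "\<epsilon> > 0" for x y \<epsilon>
  proof -
    define a where "a = (\<Sum>q\<in>P1. q x) + \<epsilon>"
    define b where "b = (\<Sum>q\<in>P2. q y) + \<epsilon>"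
    have "0 \<le> (\<Sum>q\<in>P1. q x)" "0 \<le> (\<Sum>q\<in>P2. q y)"
      using seminorm_nonneg[OF hlcs_vector_space[OF X] hlcs_seminorm_sum[OF X P1(2)]]
        seminorm_nonneg[OF hlcs_vector_space[OF Y] hlcs_seminorm_sum[OF Y P2(2)]] by auto
    then have ab: "a > 0" "b > 0"
      using that by (simp_all add: a_def b_def)
    have "p (tp (sX (complex_of_real (d1 / a)) x) (sY (complex_of_real (d2 / b)) y)) < 1"
      using that by (intro small hlcs_scale_into_ball[OF X P1(1,2) P1(3)] hlcs_scale_into_ball[OF Y P2(1,2) P2(3)])
        (simp_all add: a_def b_def)
    moreover have "tp (sX (complex_of_real (d1 / a)) x) (sY (complex_of_real (d2 / b)) y)
        = sZ (complex_of_real (d1 / a * (d2 / b))) (tp x y)"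
      by (simp only: alg_tensor_scale[OF tensor] of_real_mult)
    ultimately have "p (sZ (complex_of_real (d1 / a * (d2 / b))) (tp x y)) < 1"
      by (simp only:)
    then have "\<bar>d1 / a * (d2 / b)\<bar> * p (tp x y) < 1"
      by (simp only: seminorm_scale_real[OF hlcs_vector_space[OF Z] hlcs_seminorm[OF Z p]])
    moreover have "\<bar>d1 / a * (d2 / b)\<bar> = (d1 * d2) / (a * b)"
      using ab P1(3) P2(3) by simp
    ultimately have "p (tp x y) * (d1 * d2) < a * b"
      using ab by (simp add: field_simps)
    then show ?thesis
      by (simp add: a_def b_def)
  qed
  then have "p (tp x y) * (d1 * d2) \<le> (\<Sum>q\<in>P1. q x) * (\<Sum>q\<in>P2. q y)" for x y
    by (intro le_of_forall_pos_lt_product)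
  then have "p (tp x y) \<le> 1 / (d1 * d2) * (\<Sum>q\<in>P1. q x) * (\<Sum>q\<in>P2. q y)" for x y
    using P1(3) P2(3) by (simp add: field_simps)
  moreover have "1 / (d1 * d2) \<ge> 0"
    using P1(3) P2(3) by simp
  ultimately show ?thesis
    using that[OF P1(1,2) P2(1,2)] by blast
qed

lemma tensor_fun_in_Cbfun:
  assumes f: "f \<in> Cbfun I AX" and g: "g \<in> Cbfun J AY"
  shows "tensor_fun tp f g \<in> Cbfun (prod_topology I J) AZ"
proof -
  have "\<exists>M. \<forall>u\<in>topspace (prod_topology I J). p (tensor_fun tp f g u) \<le> M" if p: "p \<in> AZ" for p
  proof -
    obtain P1 P2 C where P: "finite P1" "P1 \<subseteq> AX" "finite P2" "P2 \<subseteq> AY" "C \<ge> 0"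
      and bound: "\<And>x y. p (tp x y) \<le> C * (\<Sum>q\<in>P1. q x) * (\<Sum>q\<in>P2. q y)"
      by (rule seminorm_tensor_bound[OF p]) (rule that)
    obtain MX where MX: "\<forall>t\<in>topspace I. (\<Sum>q\<in>P1. q (f t)) \<le> MX"
      using Cbfun_seminorm_sum_bounded[OF f P(1,2)] by blast
    obtain MY where MY: "\<forall>s\<in>topspace J. (\<Sum>q\<in>P2. q (g s)) \<le> MY"
      using Cbfun_seminorm_sum_bounded[OF g P(3,4)] by blast
    have "p (tensor_fun tp f g (t, s)) \<le> C * MX * MY" if "t \<in> topspace I" "s \<in> topspace J" for t s
    proof -
      have "0 \<le> (\<Sum>q\<in>P1. q (f t))" "0 \<le> (\<Sum>q\<in>P2. q (g s))"
        using P(2,4) seminorm_nonneg[OF hlcs_vector_space[OF X] hlcs_seminorm_sum[OF X]]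
          seminorm_nonneg[OF hlcs_vector_space[OF Y] hlcs_seminorm_sum[OF Y]] by auto
      then have "C * (\<Sum>q\<in>P1. q (f t)) * (\<Sum>q\<in>P2. q (g s)) \<le> C * MX * MY"
        using MX MY that P(5) by (intro mult_mono mult_left_mono) auto
      then show ?thesis
        using bound[of "f t" "g s"] by (simp add: tensor_fun_def)
    qed
    then show ?thesis
      by (intro exI[of _ "C * MX * MY"]) auto
  qed
  moreover have "tensor_fun tp f g \<in> Cfun (prod_topology I J) AZ"
    using f g by (intro tensor_fun_in_Cfun[OF tensor cont]) (simp_all add: Cbfun_def)
  ultimately show ?thesis
    by (simp add: Cbfun_def)
qed

lemma tensor_fun_in_C0fun:
  assumes HI: "Hausdorff_space I" and HJ: "Hausdorff_space J"
    and f: "f \<in> C0fun I AX" and g: "g \<in> C0fun J AY"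
  shows "tensor_fun tp f g \<in> C0fun (prod_topology I J) AZ"
proof -
  have "((\<lambda>u. p (tensor_fun tp f g u)) \<longlongrightarrow> 0) (cocompact (prod_topology I J))" if p: "p \<in> AZ" for p
  proof -
    obtain P1 P2 C where P: "finite P1" "P1 \<subseteq> AX" "finite P2" "P2 \<subseteq> AY" "C \<ge> 0"
      and bound: "\<And>x y. p (tp x y) \<le> C * (\<Sum>q\<in>P1. q x) * (\<Sum>q\<in>P2. q y)"
      by (rule seminorm_tensor_bound[OF p]) (rule that)
    define a where "a t = (\<Sum>q\<in>P1. q (f t))" for t
    define b where "b s = (\<Sum>q\<in>P2. q (g s))" for s
    have a0: "0 \<le> a t" and b0: "0 \<le> b s" for t s
      unfolding a_def b_def using P(2,4)
        seminorm_nonneg[OF hlcs_vector_space[OF X] hlcs_seminorm_sum[OF X]]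
        seminorm_nonneg[OF hlcs_vector_space[OF Y] hlcs_seminorm_sum[OF Y]] by auto
    have lim: "(a \<longlongrightarrow> 0) (cocompact I)" "(b \<longlongrightarrow> 0) (cocompact J)"
      unfolding a_def b_def using f g P(2,4)
      by (auto intro!: tendsto_null_sum simp: C0fun_iff[OF HI X] C0fun_iff[OF HJ Y])
    obtain MX where MX: "\<forall>t\<in>topspace I. a t \<le> MX"
      unfolding a_def using Cbfun_seminorm_sum_bounded[OF subsetD[OF C0fun_subset_Cbfun[OF HI X] f] P(1,2)]
      by blast
    obtain MY where MY: "\<forall>s\<in>topspace J. b s \<le> MY"
      unfolding b_def using Cbfun_seminorm_sum_bounded[OF subsetD[OF C0fun_subset_Cbfun[OF HJ Y] g] P(3,4)]
      by blast
    have "((\<lambda>u. a (fst u) * b (snd u)) \<longlongrightarrow> 0) (cocompact (prod_topology I J))"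
    proof (rule tendsto_cocompact_prod_mult[OF lim(1) _ lim(2)])
      show "\<bar>a t\<bar> \<le> max MX MY" if "t \<in> topspace I" for t
        using MX that a0[of t] by auto
      show "\<bar>b s\<bar> \<le> max MX MY" if "s \<in> topspace J" for s
        using MY that b0[of s] by auto
    qed
    then have lim_prod: "((\<lambda>u. C * (a (fst u) * b (snd u))) \<longlongrightarrow> 0) (cocompact (prod_topology I J))"
      by (rule tendsto_mult_right_zero)
    have "norm (p (tensor_fun tp f g u)) \<le> C * (a (fst u) * b (snd u))" for u
    proof -
      have "0 \<le> p (tensor_fun tp f g u)"
        by (rule seminorm_nonneg[OF hlcs_vector_space[OF Z] hlcs_seminorm[OF Z p]])
      moreover have "p (tensor_fun tp f g u) \<le> C * a (fst u) * b (snd u)"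
        unfolding tensor_fun_apply a_def b_def by (rule bound)
      ultimately show ?thesis
        by (simp add: mult.assoc)
    qed
    then have "\<forall>\<^sub>F u in cocompact (prod_topology I J).
        norm (p (tensor_fun tp f g u)) \<le> C * (a (fst u) * b (snd u))"
      by (intro always_eventually allI)
    then show ?thesis
      using lim_prod by (rule Lim_null_comparison)
  qed
  moreover have "tensor_fun tp f g \<in> Cfun (prod_topology I J) AZ"
    using f g by (intro tensor_fun_in_Cfun[OF tensor cont]) (simp_all add: C0fun_def)
  ultimately show ?thesis
    using HI HJ by (simp add: C0fun_iff[OF _ Z] Hausdorff_space_prod_topology)
qed

end

section \<open>Partitions of unity\<close>

lemma completely_regular_bump:
  assumes "completely_regular_space X" "openin X U" "t \<in> U"
  obtains h N where "continuous_map X euclideanreal h" "\<And>x. 0 \<le> h x \<and> h x \<le> 1"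
    "\<And>x. x \<notin> U \<Longrightarrow> h x = 0" "openin X N" "t \<in> N" "\<And>x. x \<in> N \<Longrightarrow> h x = 1"
proof -
  obtain f where f: "continuous_map X euclideanreal f" "f t = 0" "f ` (topspace X - U) \<subseteq> {1}"
    using assms(1)[unfolded completely_regular_space_alt', rule_format, OF assms(2,3)]
    by (elim exE conjE) (rule that)
  define h where "h x = (if x \<in> U then min 1 (max 0 (2 - 2 * f x)) else 0)" for x
  define N where "N = {x \<in> topspace X. f x \<in> {..<1 / 2}}"
  have "continuous_map X euclideanreal (\<lambda>x. min 1 (max 0 (2 - 2 * f x)))"
    using f(1) by (intro continuous_intros) auto
  then have hcont: "continuous_map X euclideanreal h"
    by (rule continuous_map_eq) (use f(3) in \<open>auto simp: h_def\<close>)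
  have Nopen: "openin X N"
    unfolding N_def using f(1) by (rule openin_continuous_map_preimage) simp
  have tN: "t \<in> N"
    using f(2) openin_subset[OF assms(2)] assms(3) by (auto simp: N_def)
  have h1: "h x = 1" if "x \<in> N" for x
    using that f(3) by (force simp: N_def h_def)
  show ?thesis
  proof (rule that[OF hcont _ _ Nopen tN h1])
    show "0 \<le> h x \<and> h x \<le> 1" for x
      by (simp add: h_def)
    show "h x = 0" if "x \<notin> U" for x
      using that by (simp add: h_def)
  qed
qed

definition partition_of_unity :: "'a topology \<Rightarrow> 'a set \<Rightarrow> ('i \<Rightarrow> 'a set) \<Rightarrow> 'i set \<Rightarrow> ('i \<Rightarrow> 'a \<Rightarrow> real) \<Rightarrow> bool"
  where "partition_of_unity X K U T \<alpha> \<longleftrightarrow> finite T \<and>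
    (\<forall>i\<in>T. continuous_map X euclideanreal (\<alpha> i) \<and> (\<forall>x. 0 \<le> \<alpha> i x) \<and> (\<forall>x. x \<notin> U i \<longrightarrow> \<alpha> i x = 0)) \<and>
    (\<forall>x. (\<Sum>i\<in>T. \<alpha> i x) \<le> 1) \<and> (\<forall>x\<in>K. (\<Sum>i\<in>T. \<alpha> i x) = 1)"

lemma partition_of_unity_bounds:
  assumes "partition_of_unity X K U T \<alpha>" "i \<in> T"
  shows "0 \<le> \<alpha> i x" "\<alpha> i x \<le> 1"
proof -
  show "0 \<le> \<alpha> i x"
    using assms by (simp add: partition_of_unity_def)
  have "\<alpha> i x \<le> (\<Sum>j\<in>T. \<alpha> j x)"
    using assms by (intro member_le_sum) (auto simp: partition_of_unity_def)
  also have "\<dots> \<le> 1"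
    using assms(1) by (simp add: partition_of_unity_def)
  finally show "\<alpha> i x \<le> 1" .
qed

lemma compactin_bump_cover:
  assumes CR: "completely_regular_space X" and K: "compactin X K"
    and U: "\<forall>t\<in>K. openin X (U t) \<and> t \<in> U t"
  obtains T h where "finite T" "T \<subseteq> K"
    "\<forall>i\<in>T. continuous_map X euclideanreal (h i) \<and> (\<forall>x. 0 \<le> h i x \<and> h i x \<le> 1) \<and>
       (\<forall>x. x \<notin> U i \<longrightarrow> h i x = 0)"
    "\<forall>x\<in>K. \<exists>i\<in>T. h i x = 1"
proof -
  have "\<forall>t\<in>K. \<exists>h N. continuous_map X euclideanreal h \<and> (\<forall>x. 0 \<le> h x \<and> h x \<le> 1) \<and>
      (\<forall>x. x \<notin> U t \<longrightarrow> h x = 0) \<and> openin X N \<and> t \<in> N \<and> (\<forall>x\<in>N. h x = 1)"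
  proof
    fix t assume "t \<in> K"
    then have Ut: "openin X (U t)" "t \<in> U t"
      using U by auto
    obtain h N where "continuous_map X euclideanreal h" "\<And>x. 0 \<le> h x \<and> h x \<le> 1"
      "\<And>x. x \<notin> U t \<Longrightarrow> h x = 0" "openin X N" "t \<in> N" "\<And>x. x \<in> N \<Longrightarrow> h x = 1"
      by (rule completely_regular_bump[OF CR Ut]) (rule that)
    then show "\<exists>h N. continuous_map X euclideanreal h \<and> (\<forall>x. 0 \<le> h x \<and> h x \<le> 1) \<and>
      (\<forall>x. x \<notin> U t \<longrightarrow> h x = 0) \<and> openin X N \<and> t \<in> N \<and> (\<forall>x\<in>N. h x = 1)"
      by (intro exI[of _ h] exI[of _ N]) simp
  qed
  from bchoice[OF this] obtain h where "\<forall>t\<in>K. \<exists>N. continuous_map X euclideanreal (h t) \<and>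
      (\<forall>x. 0 \<le> h t x \<and> h t x \<le> 1) \<and> (\<forall>x. x \<notin> U t \<longrightarrow> h t x = 0) \<and>
      openin X N \<and> t \<in> N \<and> (\<forall>x\<in>N. h t x = 1)"
    by (elim exE)
  from bchoice[OF this] obtain N where hN: "\<forall>t\<in>K. continuous_map X euclideanreal (h t) \<and>
      (\<forall>x. 0 \<le> h t x \<and> h t x \<le> 1) \<and> (\<forall>x. x \<notin> U t \<longrightarrow> h t x = 0) \<and>
      openin X (N t) \<and> t \<in> N t \<and> (\<forall>x\<in>N t. h t x = 1)"
    by (elim exE)
  have compact: "\<forall>\<U>. (\<forall>V\<in>\<U>. openin X V) \<and> K \<subseteq> \<Union>\<U> \<longrightarrow> (\<exists>\<F>. finite \<F> \<and> \<F> \<subseteq> \<U> \<and> K \<subseteq> \<Union>\<F>)"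
    using K unfolding compactin_def by (rule conjunct2)
  have opens: "\<forall>V\<in>N ` K. openin X V"
    using hN by auto
  have covers: "K \<subseteq> \<Union>(N ` K)"
  proof
    fix t assume "t \<in> K"
    then show "t \<in> \<Union>(N ` K)"
      using hN by auto
  qed
  obtain \<F> where \<F>: "finite \<F>" "\<F> \<subseteq> N ` K" "K \<subseteq> \<Union>\<F>"
    using compact[rule_format, OF conjI[OF opens covers]] by (elim exE conjE) (rule that)
  obtain T where T: "T \<subseteq> K" "finite T" "\<F> = N ` T"
    using finite_subset_image[OF \<F>(1,2)] by (elim exE conjE) (rule that)
  show ?thesis
  proof (rule that[OF T(2,1)])
    show "\<forall>i\<in>T. continuous_map X euclideanreal (h i) \<and> (\<forall>x. 0 \<le> h i x \<and> h i x \<le> 1) \<and>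
        (\<forall>x. x \<notin> U i \<longrightarrow> h i x = 0)"
      using hN T(1) by blast
    show "\<forall>x\<in>K. \<exists>i\<in>T. h i x = 1"
      using hN T(1) \<F>(3) T(3) by blast
  qed
qed

lemma partition_of_unity_exists:
  assumes CR: "completely_regular_space X" and K: "compactin X K"
    and U: "\<forall>t\<in>K. openin X (U t) \<and> t \<in> U t"
  obtains T \<alpha> where "T \<subseteq> K" "partition_of_unity X K U T \<alpha>"
proof -
  obtain T h where T: "finite T" "T \<subseteq> K"
    and h: "\<forall>i\<in>T. continuous_map X euclideanreal (h i) \<and> (\<forall>x. 0 \<le> h i x \<and> h i x \<le> 1) \<and>
       (\<forall>x. x \<notin> U i \<longrightarrow> h i x = 0)"
    and one: "\<forall>x\<in>K. \<exists>i\<in>T. h i x = 1"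
    by (rule compactin_bump_cover[OF CR K U]) (rule that)
  define S where "S x = (\<Sum>i\<in>T. h i x)" for x
  define \<alpha> where "\<alpha> i x = h i x / max 1 (S x)" for i x
  have sum_\<alpha>: "(\<Sum>i\<in>T. \<alpha> i x) = S x / max 1 (S x)" for x
    by (simp add: \<alpha>_def S_def sum_divide_distrib)
  show ?thesis
  proof (rule that[OF T(2)], unfold partition_of_unity_def, intro conjI ballI allI impI)
    fix i assume i: "i \<in> T"
    have "continuous_map X euclideanreal S"
      unfolding S_def using h T(1) by (intro continuous_map_sum) auto
    then show "continuous_map X euclideanreal (\<alpha> i)"
      unfolding \<alpha>_def using h i by (intro continuous_intros) auto
    show "0 \<le> \<alpha> i x" for x
      using h i by (simp add: \<alpha>_def)
    show "\<alpha> i x = 0" if "x \<notin> U i" for x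
      using h i that by (simp add: \<alpha>_def)
  next
    show "(\<Sum>i\<in>T. \<alpha> i x) \<le> 1" for x
      unfolding sum_\<alpha> by (simp add: divide_le_eq_1 less_max_iff_disj)
  next
    fix x assume "x \<in> K"
    then obtain i where i: "i \<in> T" "h i x = 1"
      using one by blast
    then have "1 \<le> S x"
      unfolding S_def using h T(1) by (intro order_trans[OF _ member_le_sum[OF i(1)]]) auto
    then show "(\<Sum>i\<in>T. \<alpha> i x) = 1"
      unfolding sum_\<alpha> by simp
  qed (rule T(1))
qed

lemma partition_of_unity_mono:
  assumes "partition_of_unity X K U T \<alpha>" "\<And>i. i \<in> T \<Longrightarrow> U i \<subseteq> U' i"
  shows "partition_of_unity X K U' T \<alpha>"
  using assms unfolding partition_of_unity_def by (meson subsetD)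

lemma partition_of_unity_support:
  assumes "partition_of_unity X K U T \<alpha>" "i \<in> T" "0 < \<alpha> i x"
  shows "x \<in> U i"
  using assms unfolding partition_of_unity_def by force

definition bump_multiples :: "'a topology \<Rightarrow> 'a set \<Rightarrow> (complex \<Rightarrow> 'x \<Rightarrow> 'x) \<Rightarrow> ('a \<Rightarrow> 'x) set"
  where "bump_multiples X U s = {(\<lambda>t. s (complex_of_real (\<alpha> t)) x) | \<alpha> x.
      continuous_map X euclideanreal \<alpha> \<and> (\<forall>t. 0 \<le> \<alpha> t \<and> \<alpha> t \<le> 1) \<and> (\<forall>t. t \<notin> U \<longrightarrow> \<alpha> t = 0)}"

lemma bump_multiplesI:
  assumes "continuous_map X euclideanreal \<alpha>" "\<And>t. 0 \<le> \<alpha> t \<and> \<alpha> t \<le> 1" "\<And>t. t \<notin> U \<Longrightarrow> \<alpha> t = 0"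
  shows "(\<lambda>t. s (complex_of_real (\<alpha> t)) x) \<in> bump_multiples X U s"
  unfolding bump_multiples_def mem_Collect_eq using assms by (intro exI[of _ \<alpha>] exI[of _ x]) simp

lemma bump_multiplesE:
  assumes "h \<in> bump_multiples X U s"
  obtains \<alpha> x where "h = (\<lambda>t. s (complex_of_real (\<alpha> t)) x)" "continuous_map X euclideanreal \<alpha>"
    "\<And>t. 0 \<le> \<alpha> t \<and> \<alpha> t \<le> 1" "\<And>t. t \<notin> U \<Longrightarrow> \<alpha> t = 0"
  using assms unfolding bump_multiples_def by auto

lemma bump_multiples_subset_Cfun:
  assumes A: "hlcs s A" and U: "U \<subseteq> topspace X"
  shows "bump_multiples X U s \<subseteq> Cfun X A"
proof
  interpret vector_space s using hlcs_vector_space[OF A] .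
  fix h assume "h \<in> bump_multiples X U s"
  then obtain \<alpha> x where h: "h = (\<lambda>t. s (complex_of_real (\<alpha> t)) x)"
    and \<alpha>: "continuous_map X euclideanreal \<alpha>" "\<And>t. t \<notin> U \<Longrightarrow> \<alpha> t = 0"
    by (rule bump_multiplesE) (rule that)
  have "h t = 0" if "t \<notin> topspace X" for t
    using that U \<alpha>(2)[of t] by (auto simp: h)
  then show "h \<in> Cfun X A"
    unfolding Cfun_def h using continuous_map_semtop_scaled_vector[OF A \<alpha>(1)] by simp
qed

lemma bump_multiples_subset_Cbfun:
  assumes A: "hlcs s A" and U: "U \<subseteq> topspace X"
  shows "bump_multiples X U s \<subseteq> Cbfun X A"
proof
  fix h assume h: "h \<in> bump_multiples X U s"
  then obtain \<alpha> x where h_eq: "h = (\<lambda>t. s (complex_of_real (\<alpha> t)) x)"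
    and \<alpha>: "\<And>t. 0 \<le> \<alpha> t \<and> \<alpha> t \<le> 1"
    by (rule bump_multiplesE) (rule that)
  have "p (h t) \<le> p x" if "p \<in> A" for p t
  proof -
    have "p (h t) = \<bar>\<alpha> t\<bar> * p x"
      unfolding h_eq by (rule seminorm_scale_real[OF hlcs_vector_space[OF A] hlcs_seminorm[OF A that]])
    also have "\<dots> \<le> 1 * p x"
      using \<alpha>[of t] seminorm_nonneg[OF hlcs_vector_space[OF A] hlcs_seminorm[OF A that]]
      by (intro mult_right_mono) auto
    finally show ?thesis by simp
  qed
  then show "h \<in> Cbfun X A"
    using h bump_multiples_subset_Cfun[OF A U] by (auto simp: Cbfun_def)
qed

lemma bump_multiples_subset_C0fun:
  assumes H: "Hausdorff_space X" and A: "hlcs s A" and D: "compactin X D" "U \<subseteq> D"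
  shows "bump_multiples X U s \<subseteq> C0fun X A"
proof
  interpret vector_space s using hlcs_vector_space[OF A] .
  fix h assume h: "h \<in> bump_multiples X U s"
  then obtain \<alpha> x where h_eq: "h = (\<lambda>t. s (complex_of_real (\<alpha> t)) x)"
    and \<alpha>: "\<And>t. t \<notin> U \<Longrightarrow> \<alpha> t = 0"
    by (rule bump_multiplesE) (rule that)
  have "((\<lambda>t. p (h t)) \<longlongrightarrow> 0) (cocompact X)" if "p \<in> A" for p
  proof (rule tendsto_eventually)
    show "\<forall>\<^sub>F t in cocompact X. p (h t) = 0"
      unfolding eventually_cocompact
    proof (intro exI[of _ D] conjI ballI)
      fix t assume "t \<in> topspace X - D"
      then have "\<alpha> t = 0"
        using D(2) \<alpha> by blast
      then show "p (h t) = 0"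
        by (simp add: h_eq seminorm_zero[OF hlcs_vector_space[OF A] hlcs_seminorm[OF A that]])
    qed (rule D(1))
  qed
  moreover have "h \<in> Cfun X A"
    using h bump_multiples_subset_Cfun[OF A order_trans[OF D(2) compactin_subset_topspace[OF D(1)]]]
    by blast
  ultimately show "h \<in> C0fun X A"
    by (simp add: C0fun_iff[OF H A])
qed

lemma partition_of_unity_bump_multiples:
  assumes "partition_of_unity X K U T \<alpha>" "i \<in> T" "U i \<subseteq> V"
  shows "(\<lambda>t. s (complex_of_real (\<alpha> i t)) x) \<in> bump_multiples X V s"
proof (rule bump_multiplesI)
  have "continuous_map X euclideanreal (\<alpha> i)" "\<And>t. t \<notin> U i \<Longrightarrow> \<alpha> i t = 0"
    using assms(1,2) by (simp_all add: partition_of_unity_def)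
  then show "continuous_map X euclideanreal (\<alpha> i)" "\<And>t. t \<notin> V \<Longrightarrow> \<alpha> i t = 0"
    using assms(3) by auto
  show "0 \<le> \<alpha> i t \<and> \<alpha> i t \<le> 1" for t
    using partition_of_unity_bounds[OF assms(1,2)] by simp
qed

section \<open>Approximation by tensor spans\<close>

lemma seminorm_tube_right:
  assumes A: "hlcs sc A" and P: "finite P" "P \<subseteq> A"
    and F: "continuous_map (prod_topology I J) (semtop A) F"
    and K: "compactin J K" and t: "t \<in> topspace I" and "e > 0"
  obtains U V where "openin I U" "openin J V" "t \<in> U" "K \<subseteq> V"
    "\<And>t' s. t' \<in> U \<Longrightarrow> s \<in> V \<Longrightarrow> (\<Sum>p\<in>P. p (F (t', s) - F (t, s))) < e"
proof -
  have "continuous_map (prod_topology I J) (prod_topology I J) (\<lambda>u. (t, snd u))"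
    using t by (intro continuous_map_pairedI continuous_map_snd) simp
  then have "continuous_map (prod_topology I J) (semtop A) (\<lambda>u. F (t, snd u))"
    using continuous_map_compose[OF _ F] by (simp add: o_def)
  then have G: "continuous_map (prod_topology I J) (semtop A) (\<lambda>u. F u - F (t, snd u))"
    by (rule continuous_map_semtop_diff[OF A F])
  define N where "N = {u \<in> topspace (prod_topology I J). (\<Sum>p\<in>P. p (F u - F (t, snd u) - 0)) < e}"
  have Nopen: "openin (prod_topology I J) N"
    unfolding N_def by (rule openin_seminorm_sublevel[OF A P G])
  have "(\<Sum>p\<in>P. p 0) = 0"
    using P(2) seminorm_zero[OF hlcs_vector_space[OF A] hlcs_seminorm[OF A]] by (intro sum.neutral) auto
  then have Nsub: "{t} \<times> K \<subseteq> N"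
    using t compactin_subset_topspace[OF K] \<open>e > 0\<close> by (auto simp: N_def)
  obtain U V where "openin I U" "openin J V" "t \<in> U" "K \<subseteq> V" "U \<times> V \<subseteq> N"
    using tube_lemma_right[OF Nopen K t Nsub] by (elim exE conjE) (rule that)
  then show ?thesis
    by (intro that) (auto simp: N_def subset_iff)
qed

lemma seminorm_tube_left:
  assumes A: "hlcs sc A" and P: "finite P" "P \<subseteq> A"
    and F: "continuous_map (prod_topology I J) (semtop A) F"
    and K: "compactin I K" and s: "s \<in> topspace J" and "e > 0"
  obtains U V where "openin I U" "openin J V" "K \<subseteq> U" "s \<in> V"
    "\<And>t s'. t \<in> U \<Longrightarrow> s' \<in> V \<Longrightarrow> (\<Sum>p\<in>P. p (F (t, s') - F (t, s))) < e"
proof -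
  have "continuous_map (prod_topology I J) (prod_topology I J) (\<lambda>u. (fst u, s))"
    using s by (intro continuous_map_pairedI continuous_map_fst) simp
  then have "continuous_map (prod_topology I J) (semtop A) (\<lambda>u. F (fst u, s))"
    using continuous_map_compose[OF _ F] by (simp add: o_def)
  then have G: "continuous_map (prod_topology I J) (semtop A) (\<lambda>u. F u - F (fst u, s))"
    by (rule continuous_map_semtop_diff[OF A F])
  define N where "N = {u \<in> topspace (prod_topology I J). (\<Sum>p\<in>P. p (F u - F (fst u, s) - 0)) < e}"
  have Nopen: "openin (prod_topology I J) N"
    unfolding N_def by (rule openin_seminorm_sublevel[OF A P G])
  have "(\<Sum>p\<in>P. p 0) = 0"
    using P(2) seminorm_zero[OF hlcs_vector_space[OF A] hlcs_seminorm[OF A]] by (intro sum.neutral) auto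
  then have Nsub: "K \<times> {s} \<subseteq> N"
    using s compactin_subset_topspace[OF K] \<open>e > 0\<close> by (auto simp: N_def)
  obtain U V where "openin I U" "openin J V" "K \<subseteq> U" "s \<in> V" "U \<times> V \<subseteq> N"
    using tube_lemma_left[OF Nopen K s Nsub] by (elim exE conjE) (rule that)
  then show ?thesis
    by (intro that) (auto simp: N_def subset_iff)
qed

lemma partition_of_unity_tube_right:
  assumes A: "hlcs sc A" and P: "finite P" "P \<subseteq> A"
    and F: "continuous_map (prod_topology I J) (semtop A) F"
    and CR: "completely_regular_space I" and K1: "compactin I K1" "openin I O1" "K1 \<subseteq> O1"
    and K2: "compactin J K2" and "e > 0"
  obtains T \<alpha> B where "T \<subseteq> K1" "partition_of_unity I K1 (\<lambda>_. O1) T \<alpha>" "openin J B" "K2 \<subseteq> B"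
    "\<And>i t s. i \<in> T \<Longrightarrow> 0 < \<alpha> i t \<Longrightarrow> s \<in> B \<Longrightarrow> (\<Sum>p\<in>P. p (F (t, s) - F (i, s))) < e"
proof -
  have "\<forall>t\<in>K1. \<exists>U V. openin I U \<and> openin J V \<and> t \<in> U \<and> K2 \<subseteq> V \<and>
      (\<forall>t'\<in>U. \<forall>s\<in>V. (\<Sum>p\<in>P. p (F (t', s) - F (t, s))) < e)"
  proof
    fix t assume "t \<in> K1"
    then have "t \<in> topspace I"
      using compactin_subset_topspace[OF K1(1)] by auto
    obtain U V where "openin I U" "openin J V" "t \<in> U" "K2 \<subseteq> V"
      "\<And>t' s. t' \<in> U \<Longrightarrow> s \<in> V \<Longrightarrow> (\<Sum>p\<in>P. p (F (t', s) - F (t, s))) < e"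
      by (rule seminorm_tube_right[OF A P F K2 \<open>t \<in> topspace I\<close> \<open>e > 0\<close>]) (rule that)
    then show "\<exists>U V. openin I U \<and> openin J V \<and> t \<in> U \<and> K2 \<subseteq> V \<and>
        (\<forall>t'\<in>U. \<forall>s\<in>V. (\<Sum>p\<in>P. p (F (t', s) - F (t, s))) < e)"
      by (intro exI[of _ U] exI[of _ V]) auto
  qed
  from bchoice[OF this] obtain U where "\<forall>t\<in>K1. \<exists>V. openin I (U t) \<and> openin J V \<and> t \<in> U t \<and>
      K2 \<subseteq> V \<and> (\<forall>t'\<in>U t. \<forall>s\<in>V. (\<Sum>p\<in>P. p (F (t', s) - F (t, s))) < e)"
    by (elim exE)
  from bchoice[OF this] obtain V where UV: "\<forall>t\<in>K1. openin I (U t) \<and> openin J (V t) \<and> t \<in> U t \<and>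
      K2 \<subseteq> V t \<and> (\<forall>t'\<in>U t. \<forall>s\<in>V t. (\<Sum>p\<in>P. p (F (t', s) - F (t, s))) < e)"
    by (elim exE)
  have Ut: "\<forall>t\<in>K1. openin I (U t \<inter> O1) \<and> t \<in> U t \<inter> O1"
    using UV K1(2,3) by auto
  obtain T \<alpha> where T: "T \<subseteq> K1" "partition_of_unity I K1 (\<lambda>t. U t \<inter> O1) T \<alpha>"
    by (rule partition_of_unity_exists[OF CR K1(1) Ut]) (rule that)
  define B where "B = topspace J \<inter> \<Inter>(V ` T)"
  show ?thesis
  proof (rule that[OF T(1) partition_of_unity_mono[OF T(2)]])
    show "U i \<inter> O1 \<subseteq> O1" for i
      by simp
    show "openin J B"
      unfolding B_def using UV T(1) T(2) by (intro openin_Int_Inter) (auto simp: partition_of_unity_def)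
    show "K2 \<subseteq> B"
      unfolding B_def using UV T(1) compactin_subset_topspace[OF K2] by auto
    fix i t s assume i: "i \<in> T" and "0 < \<alpha> i t" and "s \<in> B"
    then have "t \<in> U i" "s \<in> V i"
      using partition_of_unity_support[OF T(2) i] by (auto simp: B_def)
    then show "(\<Sum>p\<in>P. p (F (t, s) - F (i, s))) < e"
      using UV i T(1) by auto
  qed
qed

lemma partition_of_unity_tube_left:
  assumes A: "hlcs sc A" and P: "finite P" "P \<subseteq> A"
    and F: "continuous_map (prod_topology I J) (semtop A) F"
    and CR: "completely_regular_space J" and T1: "finite T1" "T1 \<subseteq> topspace I"
    and K2: "compactin J K2" "openin J O2" "K2 \<subseteq> O2" and "e > 0"
  obtains T \<beta> where "T \<subseteq> K2" "partition_of_unity J K2 (\<lambda>_. O2) T \<beta>"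
    "\<And>i j s. i \<in> T1 \<Longrightarrow> j \<in> T \<Longrightarrow> 0 < \<beta> j s \<Longrightarrow> (\<Sum>p\<in>P. p (F (i, s) - F (i, j))) < e"
proof -
  have "\<forall>s\<in>K2. \<exists>V. openin J V \<and> s \<in> V \<and> (\<forall>i\<in>T1. \<forall>s'\<in>V. (\<Sum>p\<in>P. p (F (i, s') - F (i, s))) < e)"
  proof
    fix s assume "s \<in> K2"
    then have "s \<in> topspace J"
      using compactin_subset_topspace[OF K2(1)] by auto
    obtain U V where "openin I U" "openin J V" "T1 \<subseteq> U" "s \<in> V"
      "\<And>t s'. t \<in> U \<Longrightarrow> s' \<in> V \<Longrightarrow> (\<Sum>p\<in>P. p (F (t, s') - F (t, s))) < e"
      by (rule seminorm_tube_left[OF A P F finite_imp_compactin[OF T1(2,1)] \<open>s \<in> topspace J\<close> \<open>e > 0\<close>])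
        (rule that)
    then show "\<exists>V. openin J V \<and> s \<in> V \<and> (\<forall>i\<in>T1. \<forall>s'\<in>V. (\<Sum>p\<in>P. p (F (i, s') - F (i, s))) < e)"
      by (intro exI[of _ V]) auto
  qed
  from bchoice[OF this] obtain V where V: "\<forall>s\<in>K2. openin J (V s) \<and> s \<in> V s \<and>
      (\<forall>i\<in>T1. \<forall>s'\<in>V s. (\<Sum>p\<in>P. p (F (i, s') - F (i, s))) < e)"
    by (elim exE)
  have Vs: "\<forall>s\<in>K2. openin J (V s \<inter> O2) \<and> s \<in> V s \<inter> O2"
    using V K2(2,3) by auto
  obtain T \<beta> where T: "T \<subseteq> K2" "partition_of_unity J K2 (\<lambda>s. V s \<inter> O2) T \<beta>"
    by (rule partition_of_unity_exists[OF CR K2(1) Vs]) (rule that)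
  show ?thesis
  proof (rule that[OF T(1) partition_of_unity_mono[OF T(2)]])
    show "V j \<inter> O2 \<subseteq> O2" for j
      by simp
    fix i j s assume "i \<in> T1" "j \<in> T" "0 < \<beta> j s"
    then have "s \<in> V j"
      using partition_of_unity_support[OF T(2)] by blast
    then show "(\<Sum>p\<in>P. p (F (i, s) - F (i, j))) < e"
      using V \<open>i \<in> T1\<close> \<open>j \<in> T\<close> T(1) by auto
  qed
qed

lemma product_partition_of_unity:
  assumes A: "hlcs sc A" and P: "finite P" "P \<subseteq> A"
    and F: "continuous_map (prod_topology I J) (semtop A) F"
    and CRI: "completely_regular_space I" and CRJ: "completely_regular_space J"
    and K1: "compactin I K1" "openin I O1" "K1 \<subseteq> O1"
    and K2: "compactin J K2" "openin J O2" "K2 \<subseteq> O2" and "e > 0"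
  obtains T1 \<alpha> T2 \<beta> where "T1 \<subseteq> K1" "partition_of_unity I K1 (\<lambda>_. O1) T1 \<alpha>"
    "T2 \<subseteq> K2" "partition_of_unity J K2 (\<lambda>_. O2) T2 \<beta>"
    "\<And>i j t s. i \<in> T1 \<Longrightarrow> j \<in> T2 \<Longrightarrow> 0 < \<alpha> i t \<Longrightarrow> 0 < \<beta> j s \<Longrightarrow>
      (\<Sum>p\<in>P. p (F (i, j) - F (t, s))) < e"
proof -
  define r where "r = (\<lambda>z. \<Sum>p\<in>P. p z)"
  have vs: "vector_space sc" and r: "seminorm sc r"
    using hlcs_vector_space[OF A] hlcs_seminorm_sum[OF A P(2)] by (simp_all add: r_def)
  have "e / 2 > 0"
    using \<open>e > 0\<close> by simp
  obtain T1 \<alpha> B where T1: "T1 \<subseteq> K1" "partition_of_unity I K1 (\<lambda>_. O1) T1 \<alpha>" "openin J B" "K2 \<subseteq> B"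
    and close1: "\<And>i t s. i \<in> T1 \<Longrightarrow> 0 < \<alpha> i t \<Longrightarrow> s \<in> B \<Longrightarrow>
      (\<Sum>p\<in>P. p (F (t, s) - F (i, s))) < e / 2"
    by (rule partition_of_unity_tube_right[OF A P F CRI K1 K2(1) \<open>e / 2 > 0\<close>]) (rule that)
  have "finite T1" "T1 \<subseteq> topspace I"
    using T1(1,2) compactin_subset_topspace[OF K1(1)] by (auto simp: partition_of_unity_def)
  \<comment> \<open>Supporting the \<open>\<beta>\<^sub>j\<close> inside \<open>B\<close> makes the first tube estimate available wherever
      some \<open>\<beta>\<^sub>j\<close> is positive.\<close>
  moreover have "openin J (O2 \<inter> B)" "K2 \<subseteq> O2 \<inter> B"
    using K2(2,3) T1(3,4) by auto
  ultimately obtain T2 \<beta> where T2: "T2 \<subseteq> K2" "partition_of_unity J K2 (\<lambda>_. O2 \<inter> B) T2 \<beta>"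
    and close2: "\<And>i j s. i \<in> T1 \<Longrightarrow> j \<in> T2 \<Longrightarrow> 0 < \<beta> j s \<Longrightarrow>
      (\<Sum>p\<in>P. p (F (i, s) - F (i, j))) < e / 2"
    by (rule partition_of_unity_tube_left[OF A P F CRJ _ _ K2(1) _ _ \<open>e / 2 > 0\<close>]) (rule that)
  show ?thesis
  proof (rule that[OF T1(1,2) T2(1) partition_of_unity_mono[OF T2(2)]])
    show "O2 \<inter> B \<subseteq> O2"
      by simp
    fix i j t s assume ij: "i \<in> T1" "j \<in> T2" and pos: "0 < \<alpha> i t" "0 < \<beta> j s"
    then have "s \<in> B"
      using partition_of_unity_support[OF T2(2) ij(2) pos(2)] by simp
    then have "r (F (t, s) - F (i, s)) < e / 2" "r (F (i, s) - F (i, j)) < e / 2"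
      using close1[OF ij(1) pos(1)] close2[OF ij pos(2)] by (simp_all add: r_def)
    moreover have "r (F (i, j) - F (t, s)) \<le> r (F (i, j) - F (i, s)) + r (F (i, s) - F (t, s))"
      by (rule seminorm_triangle_diff[OF vs r])
    moreover have "r (F (i, j) - F (i, s)) = r (F (i, s) - F (i, j))"
      "r (F (i, s) - F (t, s)) = r (F (t, s) - F (i, s))"
      by (simp_all add: seminorm_diff_commute[OF vs r])
    ultimately show "(\<Sum>p\<in>P. p (F (i, j) - F (t, s))) < e"
      unfolding r_def by linarith
  qed
qed

lemma tensor_span_approximation:
  assumes Z: "hlcs sZ AZ" and tensor: "alg_tensor sX sY sZ tp"
    and CRI: "completely_regular_space I" and CRJ: "completely_regular_space J"
    and F: "F \<in> Cfun (prod_topology I J) AZ" and P: "finite P" "P \<subseteq> AZ"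
    and K1: "compactin I K1" "openin I O1" "K1 \<subseteq> O1"
    and K2: "compactin J K2" "openin J O2" "K2 \<subseteq> O2" and "\<eta> > 0"
  obtains w where "w \<in> tensor_span sZ tp (bump_multiples I O1 sX) (bump_multiples J O2 sY)"
    "\<And>u p. u \<in> K1 \<times> K2 \<Longrightarrow> p \<in> P \<Longrightarrow> p (F u - w u) \<le> \<eta>"
    "\<And>u p. p \<in> P \<Longrightarrow> p (w u) \<le> p (F u) + \<eta>"
proof -
  define r where "r = (\<lambda>z. \<Sum>p\<in>P. p z)"
  have vs: "vector_space sZ" and r: "seminorm sZ r"
    using hlcs_vector_space[OF Z] hlcs_seminorm_sum[OF Z P(2)] by (simp_all add: r_def)
  interpret Z: vector_space sZ by (fact vs)
  have "continuous_map (prod_topology I J) (semtop AZ) F"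
    using F by (simp add: Cfun_def)
  then obtain T1 \<alpha> T2 \<beta> where T1: "T1 \<subseteq> K1" "partition_of_unity I K1 (\<lambda>_. O1) T1 \<alpha>"
    and T2: "T2 \<subseteq> K2" "partition_of_unity J K2 (\<lambda>_. O2) T2 \<beta>"
    and close: "\<And>i j t s. i \<in> T1 \<Longrightarrow> j \<in> T2 \<Longrightarrow> 0 < \<alpha> i t \<Longrightarrow> 0 < \<beta> j s \<Longrightarrow>
      (\<Sum>p\<in>P. p (F (i, j) - F (t, s))) < \<eta>"
    by (rule product_partition_of_unity[OF Z P _ CRI CRJ K1 K2 \<open>\<eta> > 0\<close>]) (rule that)
  have T: "finite T1" "finite T2"
    using T1(2) T2(2) by (simp_all add: partition_of_unity_def)
  define w where "w u = (\<Sum>k\<in>T1 \<times> T2. sZ (complex_of_real (\<alpha> (fst k) (fst u) * \<beta> (snd k) (snd u))) (F k))"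
    for u
  define L where "L u = (\<Sum>i\<in>T1. \<alpha> i (fst u)) * (\<Sum>j\<in>T2. \<beta> j (snd u))" for u
  have approx: "r (w u - sZ (complex_of_real (L u)) (F u)) \<le> L u * \<eta>" for u
    unfolding w_def L_def
    using T partition_of_unity_bounds[OF T1(2)] partition_of_unity_bounds[OF T2(2)] close[of _ _ "fst u" "snd u"]
    by (intro seminorm_product_combination_le[OF vs r]) (auto simp: r_def intro: less_imp_le)
  have L: "0 \<le> L u" "L u \<le> 1" for u
    using T1(2) T2(2) unfolding L_def partition_of_unity_def
    by (auto intro!: mult_nonneg_nonneg mult_le_one sum_nonneg)
  show ?thesis
  proof (rule that)
    show "w \<in> tensor_span sZ tp (bump_multiples I O1 sX) (bump_multiples J O2 sY)"
      unfolding w_def[abs_def] using T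
      by (intro tensor_span_product_sum[OF tensor] partition_of_unity_bump_multiples[OF T1(2)]
          partition_of_unity_bump_multiples[OF T2(2)]) auto
  next
    fix u p assume "u \<in> K1 \<times> K2" "p \<in> P"
    then have "L u = 1"
      using T1(2) T2(2) by (auto simp: L_def partition_of_unity_def mem_Times_iff)
    then have "r (F u - w u) \<le> \<eta>"
      using approx[of u] seminorm_diff_commute[OF vs r, of "F u" "w u"] by simp
    then show "p (F u - w u) \<le> \<eta>"
      using hlcs_seminorm_le_sum[OF Z P \<open>p \<in> P\<close>, of "F u - w u"] by (simp add: r_def)
  next
    fix u p assume "p \<in> P"
    have p: "seminorm sZ p"
      using P(2) \<open>p \<in> P\<close> by (blast intro: hlcs_seminorm[OF Z])
    have dom: "p z \<le> r z" for z
      using hlcs_seminorm_le_sum[OF Z P \<open>p \<in> P\<close>] by (simp add: r_def)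
    show "p (w u) \<le> p (F u) + \<eta>"
      using \<open>\<eta> > 0\<close> by (intro seminorm_le_of_scaled_approx[OF vs p dom L(1,2) _ approx]) simp
  qed
qed

lemma tensor_span_approximation_compact:
  assumes Z: "hlcs sZ AZ" and tensor: "alg_tensor sX sY sZ tp"
    and CRI: "completely_regular_space I" and CRJ: "completely_regular_space J"
    and F: "F \<in> Cfun (prod_topology I J) AZ" and K: "compactin (prod_topology I J) K"
    and Q: "finite Q" "Q \<subseteq> AZ" and "\<eta> > 0"
  obtains w where
    "w \<in> tensor_span sZ tp (bump_multiples I (topspace I) sX) (bump_multiples J (topspace J) sY)"
    "\<And>u p. u \<in> K \<Longrightarrow> p \<in> Q \<Longrightarrow> p (F u - w u) \<le> \<eta>" "\<And>u p. p \<in> Q \<Longrightarrow> p (w u) \<le> p (F u) + \<eta>"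
proof -
  have K1: "compactin I (fst ` K)" and K2: "compactin J (snd ` K)"
    using image_compactin[OF K continuous_map_fst] image_compactin[OF K continuous_map_snd] by auto
  obtain w where w: "w \<in> tensor_span sZ tp (bump_multiples I (topspace I) sX) (bump_multiples J (topspace J) sY)"
    "\<And>u p. u \<in> fst ` K \<times> snd ` K \<Longrightarrow> p \<in> Q \<Longrightarrow> p (F u - w u) \<le> \<eta>"
    "\<And>u p. p \<in> Q \<Longrightarrow> p (w u) \<le> p (F u) + \<eta>"
    by (rule tensor_span_approximation[OF Z tensor CRI CRJ F Q K1 openin_topspace
          compactin_subset_topspace[OF K1] K2 openin_topspace compactin_subset_topspace[OF K2] \<open>\<eta> > 0\<close>])
      (rule that)
  show ?thesis
  proof (rule that[OF w(1) _ w(3)])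
    fix u p assume "u \<in> K" "p \<in> Q"
    then show "p (F u - w u) \<le> \<eta>"
      by (intro w(2)) (simp_all add: mem_Times_iff)
  qed
qed

section \<open>Density in the function spaces\<close>

lemma ssup_le:
  assumes "0 \<le> B" "\<And>x. x \<in> S \<Longrightarrow> h x \<le> B"
  shows "ssup S h \<le> B"
  unfolding ssup_def using assms by (intro cSup_least) auto

lemma closure_in_fs_eqI:
  assumes "\<And>F P e. F \<in> M \<Longrightarrow> finite P \<Longrightarrow> P \<subseteq> S \<Longrightarrow> e > 0 \<Longrightarrow>
      \<exists>w\<in>W. \<forall>q\<in>P. q (\<lambda>u. F u - w u) < e"
  shows "closure_in_fs S M W = M"
  using assms unfolding closure_in_fs_def by blast

lemma closure_in_fs_antimono: "S' \<subseteq> S \<Longrightarrow> closure_in_fs S M W \<subseteq> closure_in_fs S' M W"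
  unfolding closure_in_fs_def by blast

lemma point_open_seminorms_subset: "point_open_seminorms X A \<subseteq> compact_open_seminorms X A"
  unfolding point_open_seminorms_def compact_open_seminorms_def by (auto intro: finite_imp_compactin)

lemma finite_subset_image_pairs:
  assumes "finite P" "P \<subseteq> {g a b | a b. R a b}"
  obtains Q where "finite Q" "Q \<subseteq> {(a, b). R a b}" "P = (\<lambda>(a, b). g a b) ` Q"
proof -
  have "P \<subseteq> (\<lambda>(a, b). g a b) ` {(a, b). R a b}"
    using assms(2) by auto
  then show ?thesis
    using finite_subset_image[OF assms(1)] that by blast
qed

lemma strict_weight_eventually_small:
  assumes "strict_weight X v" "e > 0"
  shows "\<forall>\<^sub>F x in cocompact X. v x < e"
  unfolding eventually_cocompact
proof (intro exI conjI ballI)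
  let ?C = "X closure_of {x \<in> topspace X. \<bar>v x\<bar> \<ge> e}"
  show "compactin X ?C"
    using assms by (simp add: strict_weight_def)
  have "{x \<in> topspace X. \<bar>v x\<bar> \<ge> e} \<subseteq> ?C"
    by (rule closure_of_subset) auto
  then show "v x < e" if "x \<in> topspace X - ?C" for x
    using that by (auto simp: not_le)
qed

lemma strict_weight_bounded:
  assumes "strict_weight X v"
  shows "\<exists>V. \<forall>x\<in>topspace X. v x \<le> V"
proof (rule usc_bounded_above_cocompact)
  show "usc X v"
    using assms by (simp add: strict_weight_def)
  have "\<forall>\<^sub>F x in cocompact X. v x < 1"
    by (rule strict_weight_eventually_small[OF assms]) simp
  then show "\<forall>\<^sub>F x in cocompact X. v x \<le> 1"
    by (rule eventually_mono) simp
qed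

lemma closure_in_fs_subset: "closure_in_fs S M W \<subseteq> M"
  unfolding closure_in_fs_def by blast

lemma strict_weights_small_off_compact:
  assumes "finite Q" "\<forall>v\<in>Q. strict_weight X v" "\<delta> > 0"
  obtains C where "compactin X C" "\<And>x v. x \<in> topspace X \<Longrightarrow> x \<notin> C \<Longrightarrow> v \<in> Q \<Longrightarrow> v x < \<delta>"
proof -
  have "\<forall>\<^sub>F x in cocompact X. \<forall>v\<in>Q. v x < \<delta>"
    using assms by (intro eventually_ball_finite ballI strict_weight_eventually_small) auto
  then obtain C where "compactin X C" "\<forall>x\<in>topspace X - C. \<forall>v\<in>Q. v x < \<delta>"
    unfolding eventually_cocompact by (elim exE conjE) (rule that)
  then show ?thesis
    by (intro that[of C]) auto
qed

context
  fixes I :: "'i topology" and J :: "'j topology"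
    and sX :: "complex \<Rightarrow> 'x::ab_group_add \<Rightarrow> 'x" and AX :: "('x \<Rightarrow> real) set"
    and sY :: "complex \<Rightarrow> 'y::ab_group_add \<Rightarrow> 'y" and AY :: "('y \<Rightarrow> real) set"
    and sZ :: "complex \<Rightarrow> 'z::ab_group_add \<Rightarrow> 'z" and AZ :: "('z \<Rightarrow> real) set"
    and tp :: "'x \<Rightarrow> 'y \<Rightarrow> 'z"
  assumes X: "hlcs sX AX" and Y: "hlcs sY AY" and Z: "hlcs sZ AZ"
    and tensor: "alg_tensor sX sY sZ tp"
    and CRI: "completely_regular_space I" and CRJ: "completely_regular_space J"
begin

lemma tensor_span_dense_compact_open:
  "closure_in_fs (compact_open_seminorms (prod_topology I J) AZ) (Cfun (prod_topology I J) AZ)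
      (tensor_span sZ tp (Cfun I AX) (Cfun J AY)) = Cfun (prod_topology I J) AZ"
proof (rule closure_in_fs_eqI)
  fix F P and e :: real
  assume F: "F \<in> Cfun (prod_topology I J) AZ" and "finite P"
    and P: "P \<subseteq> compact_open_seminorms (prod_topology I J) AZ" and "e > 0"
  obtain Q where Q: "finite Q" "Q \<subseteq> {(p, K). p \<in> AZ \<and> compactin (prod_topology I J) K}"
    "P = (\<lambda>(p, K). \<lambda>f. ssup K (\<lambda>x. p (f x))) ` Q"
    using \<open>finite P\<close> P unfolding compact_open_seminorms_def by (rule finite_subset_image_pairs)
  define K where "K = \<Union>(snd ` Q)"
  have K: "compactin (prod_topology I J) K"
    unfolding K_def using Q(1,2) by (intro compactin_Union) auto
  have "finite (fst ` Q)" "fst ` Q \<subseteq> AZ" "e / 2 > 0"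
    using Q(1,2) \<open>e > 0\<close> by auto
  then obtain w where w: "w \<in> tensor_span sZ tp (bump_multiples I (topspace I) sX) (bump_multiples J (topspace J) sY)"
    "\<And>u p. u \<in> K \<Longrightarrow> p \<in> fst ` Q \<Longrightarrow> p (F u - w u) \<le> e / 2"
    by (rule tensor_span_approximation_compact[OF Z tensor CRI CRJ F K]) (rule that)
  have "w \<in> tensor_span sZ tp (Cfun I AX) (Cfun J AY)"
    using w(1) tensor_span_mono[OF bump_multiples_subset_Cfun[OF X subset_refl] bump_multiples_subset_Cfun[OF Y subset_refl]]
    by blast
  moreover have "q (\<lambda>u. F u - w u) < e" if q: "q \<in> P" for q
  proof -
    obtain k where k: "k \<in> Q" "q = (\<lambda>(p, K). \<lambda>f. ssup K (\<lambda>x. p (f x))) k"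
      using q unfolding Q(3) by (rule imageE)
    obtain p K' where "k = (p, K')"
      by (cases k)
    then have pK': "(p, K') \<in> Q" "q = (\<lambda>f. ssup K' (\<lambda>x. p (f x)))"
      using k by simp_all
    then have "ssup K' (\<lambda>x. p (F x - w x)) \<le> e / 2"
      using \<open>e > 0\<close> w(2) by (intro ssup_le) (force simp: K_def)+
    then show ?thesis
      using \<open>e > 0\<close> pK'(2) by simp
  qed
  ultimately show "\<exists>w\<in>tensor_span sZ tp (Cfun I AX) (Cfun J AY). \<forall>q\<in>P. q (\<lambda>u. F u - w u) < e"
    by blast
qed

lemma tensor_span_dense_point_open:
  "closure_in_fs (point_open_seminorms (prod_topology I J) AZ) (Cfun (prod_topology I J) AZ)
      (tensor_span sZ tp (Cfun I AX) (Cfun J AY)) = Cfun (prod_topology I J) AZ"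
  using closure_in_fs_antimono[OF point_open_seminorms_subset] tensor_span_dense_compact_open
    closure_in_fs_subset by (metis subset_antisym)

lemma tensor_span_weighted_approximation:
  assumes F: "F \<in> Cbfun (prod_topology I J) AZ" and Q: "finite Q"
    and QAZ: "Q \<subseteq> {(p, v). p \<in> AZ \<and> strict_weight (prod_topology I J) v}" and "e > 0"
  obtains w where "w \<in> tensor_span sZ tp (Cbfun I AX) (Cbfun J AY)"
    "\<And>p v x. (p, v) \<in> Q \<Longrightarrow> x \<in> topspace (prod_topology I J) \<Longrightarrow> v x * p (F x - w x) \<le> e"
proof -
  let ?T = "topspace (prod_topology I J)"
  have Qsub: "p \<in> AZ \<and> strict_weight (prod_topology I J) v" if "(p, v) \<in> Q" for p v
    using QAZ that by auto
  have bdF: "\<forall>k\<in>Q. \<exists>M. \<forall>x\<in>?T. fst k (F x) \<le> M"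
    using F Qsub by (auto simp: Cbfun_def)
  have bdv: "\<forall>k\<in>Q. \<exists>V. \<forall>x\<in>?T. snd k x \<le> V"
    using strict_weight_bounded Qsub by fastforce
  obtain M V where M: "\<forall>k\<in>Q. \<forall>x\<in>?T. fst k (F x) \<le> M" and V: "\<forall>k\<in>Q. \<forall>x\<in>?T. snd k x \<le> V"
    using bounded_above_finite_family[OF Q bdF] bounded_above_finite_family[OF Q bdv] by blast
  define \<eta> where "\<eta> = min 1 (e / (\<bar>V\<bar> + 1))"
  define \<delta> where "\<delta> = e / (2 * \<bar>M\<bar> + 2)"
  have \<eta>: "0 < \<eta>" "\<eta> \<le> 1" "\<bar>V\<bar> * \<eta> \<le> e" and \<delta>: "0 < \<delta>" "\<delta> * (2 * \<bar>M\<bar> + 2) = e"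
    using \<open>e > 0\<close> by (auto simp: \<eta>_def \<delta>_def field_simps min_def)
  have "finite (snd ` Q)" "\<forall>v\<in>snd ` Q. strict_weight (prod_topology I J) v"
    using Q Qsub by auto
  then obtain C where C: "compactin (prod_topology I J) C"
    "\<And>x v. x \<in> ?T \<Longrightarrow> x \<notin> C \<Longrightarrow> v \<in> snd ` Q \<Longrightarrow> v x < \<delta>"
    by (rule strict_weights_small_off_compact[OF _ _ \<delta>(1)]) (rule that)
  have "F \<in> Cfun (prod_topology I J) AZ" "finite (fst ` Q)" "fst ` Q \<subseteq> AZ"
    using F Q Qsub by (auto simp: Cbfun_def)
  then obtain w where w: "w \<in> tensor_span sZ tp (bump_multiples I (topspace I) sX) (bump_multiples J (topspace J) sY)"
    "\<And>u p. u \<in> C \<Longrightarrow> p \<in> fst ` Q \<Longrightarrow> p (F u - w u) \<le> \<eta>" "\<And>u p. p \<in> fst ` Q \<Longrightarrow> p (w u) \<le> p (F u) + \<eta>"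
    by (rule tensor_span_approximation_compact[OF Z tensor CRI CRJ _ C(1) _ _ \<eta>(1)]) (rule that)
  show ?thesis
  proof (rule that)
    show "w \<in> tensor_span sZ tp (Cbfun I AX) (Cbfun J AY)"
      using w(1) tensor_span_mono[OF bump_multiples_subset_Cbfun[OF X subset_refl]
          bump_multiples_subset_Cbfun[OF Y subset_refl]] by blast
    fix p v x assume pv: "(p, v) \<in> Q" and x: "x \<in> ?T"
    have p: "seminorm sZ p" "p \<in> fst ` Q"
      using hlcs_seminorm[OF Z] Qsub[OF pv] image_eqI[of p fst "(p, v)" Q] pv by simp_all
    have "snd (p, v) x \<le> V" "fst (p, v) (F x) \<le> M"
      using V M pv x by blast+
    then have v: "0 \<le> v x" "v x \<le> \<bar>V\<bar>" and pF: "p (F x) \<le> \<bar>M\<bar>"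
      using Qsub[OF pv] x by (auto simp: strict_weight_def)
    have err0: "0 \<le> p (F x - w x)"
      by (rule seminorm_nonneg[OF hlcs_vector_space[OF Z] p(1)])
    show "v x * p (F x - w x) \<le> e"
    proof (cases "x \<in> C")
      case True
      then have "v x * p (F x - w x) \<le> \<bar>V\<bar> * \<eta>"
        using v err0 w(2)[OF True p(2)] by (intro mult_mono) auto
      then show ?thesis
        using \<eta>(3) by linarith
    next
      case False
      then have "v x \<le> \<delta>"
        using C(2)[OF x False, of v] pv by force
      have "p (F x - w x) \<le> p (F x) + p (w x)"
        by (rule seminorm_diff_le[OF hlcs_vector_space[OF Z] p(1)])
      also have "\<dots> \<le> 2 * \<bar>M\<bar> + 2"
        using pF w(3)[OF p(2), of x] \<eta>(2) by linarith
      finally have "v x * p (F x - w x) \<le> \<delta> * (2 * \<bar>M\<bar> + 2)"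
        using v(1) err0 \<open>v x \<le> \<delta>\<close> by (intro mult_mono) auto
      then show ?thesis
        using \<delta>(2) by simp
    qed
  qed
qed

lemma tensor_span_C0_approximation:
  assumes HI: "Hausdorff_space I" and HJ: "Hausdorff_space J"
    and LC: "locally_compact_space (prod_topology I J)"
    and F: "F \<in> C0fun (prod_topology I J) AZ" and Q: "finite Q" "Q \<subseteq> AZ" and "e > 0"
  obtains w where "w \<in> tensor_span sZ tp (C0fun I AX) (C0fun J AY)"
    "\<And>p x. p \<in> Q \<Longrightarrow> x \<in> topspace (prod_topology I J) \<Longrightarrow> p (F x - w x) < e"
proof -
  let ?T = "topspace (prod_topology I J)"
  have HP: "Hausdorff_space (prod_topology I J)"
    using HI HJ by (simp add: Hausdorff_space_prod_topology)
  have FC: "F \<in> Cfun (prod_topology I J) AZ"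
    using F by (simp add: C0fun_def)
  have "\<forall>\<^sub>F x in cocompact (prod_topology I J). \<forall>p\<in>Q. p (F x) < e / 4"
  proof (rule eventually_ball_finite[OF Q(1)], rule ballI)
    fix p assume "p \<in> Q"
    then have "((\<lambda>x. p (F x)) \<longlongrightarrow> 0) (cocompact (prod_topology I J))"
      using F Q(2) by (auto simp: C0fun_iff[OF HP Z])
    then show "\<forall>\<^sub>F x in cocompact (prod_topology I J). p (F x) < e / 4"
      by (rule order_tendstoD(2)) (simp add: \<open>e > 0\<close>)
  qed
  then obtain C where C: "compactin (prod_topology I J) C" "\<forall>x\<in>?T - C. \<forall>p\<in>Q. p (F x) < e / 4"
    unfolding eventually_cocompact by (elim exE conjE) (rule that)
  \<comment> \<open>Local compactness keeps the supports of the partitions of unity inside compact sets,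
      so that the approximant vanishes at infinity.\<close>
  obtain U L where UL: "openin (prod_topology I J) U" "compactin (prod_topology I J) L" "C \<subseteq> U" "U \<subseteq> L"
    using iffD1[OF locally_compact_space_compact_closed_compact[OF disjI1[OF HP]] LC, rule_format, OF C(1)]
    by (elim exE conjE) (rule that)
  have O: "openin I (fst ` U)" "openin J (snd ` U)"
    using open_map_fst open_map_snd UL(1) unfolding open_map_def by blast+
  have K: "compactin I (fst ` C)" "compactin J (snd ` C)" "compactin I (fst ` L)" "compactin J (snd ` L)"
    using C(1) UL(2) by (auto intro: image_compactin continuous_map_fst continuous_map_snd)
  have e4: "e / 4 > 0"
    using \<open>e > 0\<close> by simp
  obtain w where w: "w \<in> tensor_span sZ tp (bump_multiples I (fst ` U) sX) (bump_multiples J (snd ` U) sY)"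
    "\<And>u p. u \<in> fst ` C \<times> snd ` C \<Longrightarrow> p \<in> Q \<Longrightarrow> p (F u - w u) \<le> e / 4"
    "\<And>u p. p \<in> Q \<Longrightarrow> p (w u) \<le> p (F u) + e / 4"
    by (rule tensor_span_approximation[OF Z tensor CRI CRJ FC Q K(1) O(1) image_mono[OF UL(3)]
          K(2) O(2) image_mono[OF UL(3)] e4]) (rule that)
  show ?thesis
  proof (rule that)
    show "w \<in> tensor_span sZ tp (C0fun I AX) (C0fun J AY)"
      using w(1) tensor_span_mono[OF bump_multiples_subset_C0fun[OF HI X K(3) image_mono[OF UL(4)]]
          bump_multiples_subset_C0fun[OF HJ Y K(4) image_mono[OF UL(4)]]] by blast
    fix p x assume p: "p \<in> Q" and x: "x \<in> ?T"
    show "p (F x - w x) < e"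
    proof (cases "x \<in> C")
      case True
      then have "p (F x - w x) \<le> e / 4"
        using w(2)[OF _ p] by (simp add: mem_Times_iff)
      then show ?thesis
        using \<open>e > 0\<close> by linarith
    next
      case False
      then have "p (F x) < e / 4"
        using C(2) x p by blast
      moreover have "p (F x - w x) \<le> p (F x) + p (w x)"
        using Q(2) p by (intro seminorm_diff_le[OF hlcs_vector_space[OF Z] hlcs_seminorm[OF Z]]) auto
      ultimately show ?thesis
        using w(3)[OF p, of x] \<open>e > 0\<close> by linarith
    qed
  qed
qed

lemma tensor_span_dense_strict:
  "closure_in_fs (strict_seminorms (prod_topology I J) AZ) (Cbfun (prod_topology I J) AZ)
      (tensor_span sZ tp (Cbfun I AX) (Cbfun J AY)) = Cbfun (prod_topology I J) AZ"
proof (rule closure_in_fs_eqI)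
  let ?T = "topspace (prod_topology I J)"
  fix F P and e :: real
  assume F: "F \<in> Cbfun (prod_topology I J) AZ" and "finite P"
    and P: "P \<subseteq> strict_seminorms (prod_topology I J) AZ" and "e > 0"
  obtain Q where Q: "finite Q" "Q \<subseteq> {(p, v). p \<in> AZ \<and> strict_weight (prod_topology I J) v}"
    "P = (\<lambda>(p, v). \<lambda>f. ssup ?T (\<lambda>x. v x * p (f x))) ` Q"
    using \<open>finite P\<close> P unfolding strict_seminorms_def by (rule finite_subset_image_pairs)
  have "e / 2 > 0"
    using \<open>e > 0\<close> by simp
  obtain w where w: "w \<in> tensor_span sZ tp (Cbfun I AX) (Cbfun J AY)"
    "\<And>p v x. (p, v) \<in> Q \<Longrightarrow> x \<in> ?T \<Longrightarrow> v x * p (F x - w x) \<le> e / 2"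
    by (rule tensor_span_weighted_approximation[OF F Q(1,2) \<open>e / 2 > 0\<close>]) (rule that)
  moreover have "q (\<lambda>u. F u - w u) < e" if q: "q \<in> P" for q
  proof -
    obtain k where k: "k \<in> Q" "q = (\<lambda>(p, v). \<lambda>f. ssup ?T (\<lambda>x. v x * p (f x))) k"
      using q unfolding Q(3) by (rule imageE)
    obtain p v where "k = (p, v)"
      by (cases k)
    with k have "ssup ?T (\<lambda>x. v x * p (F x - w x)) \<le> e / 2"
      using \<open>e > 0\<close> w(2) by (intro ssup_le) auto
    then show ?thesis
      using \<open>e > 0\<close> k(2) \<open>k = (p, v)\<close> by simp
  qed
  ultimately show "\<exists>w\<in>tensor_span sZ tp (Cbfun I AX) (Cbfun J AY). \<forall>q\<in>P. q (\<lambda>u. F u - w u) < e"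
    by blast
qed

lemma tensor_span_dense_C0:
  assumes HI: "Hausdorff_space I" and HJ: "Hausdorff_space J"
    and LC: "locally_compact_space (prod_topology I J)"
  shows "closure_in_fs (uniform_seminorms (prod_topology I J) AZ) (C0fun (prod_topology I J) AZ)
      (tensor_span sZ tp (C0fun I AX) (C0fun J AY)) = C0fun (prod_topology I J) AZ"
proof (rule closure_in_fs_eqI)
  let ?T = "topspace (prod_topology I J)"
  fix F P and e :: real
  assume F: "F \<in> C0fun (prod_topology I J) AZ" and "finite P"
    and P: "P \<subseteq> uniform_seminorms (prod_topology I J) AZ" and "e > 0"
  have Psub: "P \<subseteq> (\<lambda>p f. ssup ?T (\<lambda>x. p (f x))) ` AZ"
    using P by (simp add: uniform_seminorms_def setcompr_eq_image)
  obtain Q where Q: "Q \<subseteq> AZ" "finite Q" "P = (\<lambda>p f. ssup ?T (\<lambda>x. p (f x))) ` Q"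
    using finite_subset_image[OF \<open>finite P\<close> Psub] by (elim exE conjE) (rule that)
  have "e / 2 > 0"
    using \<open>e > 0\<close> by simp
  obtain w where w: "w \<in> tensor_span sZ tp (C0fun I AX) (C0fun J AY)"
    "\<And>p x. p \<in> Q \<Longrightarrow> x \<in> ?T \<Longrightarrow> p (F x - w x) < e / 2"
    by (rule tensor_span_C0_approximation[OF HI HJ LC F Q(2,1) \<open>e / 2 > 0\<close>]) (rule that)
  moreover have "q (\<lambda>u. F u - w u) < e" if q: "q \<in> P" for q
  proof -
    obtain p where p: "p \<in> Q" "q = (\<lambda>f. ssup ?T (\<lambda>x. p (f x)))"
      using q unfolding Q(3) by (rule imageE)
    then have "ssup ?T (\<lambda>x. p (F x - w x)) \<le> e / 2"
      using \<open>e > 0\<close> w(2) by (intro ssup_le) (auto intro: less_imp_le)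
    then show ?thesis
      using \<open>e > 0\<close> p(2) by simp
  qed
  ultimately show "\<exists>w\<in>tensor_span sZ tp (C0fun I AX) (C0fun J AY). \<forall>q\<in>P. q (\<lambda>u. F u - w u) < e"
    by blast
qed

end

theorem corollary3p25:
  fixes I :: "'i topology" and J :: "'j topology"
    and sX :: "complex \<Rightarrow> 'x::ab_group_add \<Rightarrow> 'x" and AX :: "('x \<Rightarrow> real) set"
    and sY :: "complex \<Rightarrow> 'y::ab_group_add \<Rightarrow> 'y" and AY :: "('y \<Rightarrow> real) set"
    and sZ :: "complex \<Rightarrow> 'z::ab_group_add \<Rightarrow> 'z" and AZ :: "('z \<Rightarrow> real) set"
    and tp :: "'x \<Rightarrow> 'y \<Rightarrow> 'z"
  assumes I: "completely_regular_space I" "Hausdorff_space I"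
    and J: "completely_regular_space J" "Hausdorff_space J"
    and X: "hlcs sX AX" and Y: "hlcs sY AY" and Z: "hlcs sZ AZ"
    and tensor: "alg_tensor sX sY sZ tp"
    and cont: "continuous_map (prod_topology (semtop AX) (semtop AY)) (semtop AZ) (\<lambda>(x, y). tp x y)"
  shows
    "(locally_compact_space (prod_topology I J) \<longrightarrow>
        tensor_span sZ tp (C0fun I AX) (C0fun J AY) \<subseteq> C0fun (prod_topology I J) AZ \<and>
        closure_in_fs (uniform_seminorms (prod_topology I J) AZ) (C0fun (prod_topology I J) AZ)
          (tensor_span sZ tp (C0fun I AX) (C0fun J AY)) = C0fun (prod_topology I J) AZ)
   \<and> (tensor_span sZ tp (Cbfun I AX) (Cbfun J AY) \<subseteq> Cbfun (prod_topology I J) AZ \<and>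
        closure_in_fs (strict_seminorms (prod_topology I J) AZ) (Cbfun (prod_topology I J) AZ)
          (tensor_span sZ tp (Cbfun I AX) (Cbfun J AY)) = Cbfun (prod_topology I J) AZ)
   \<and> (tensor_span sZ tp (Cfun I AX) (Cfun J AY) \<subseteq> Cfun (prod_topology I J) AZ \<and>
        closure_in_fs (compact_open_seminorms (prod_topology I J) AZ) (Cfun (prod_topology I J) AZ)
          (tensor_span sZ tp (Cfun I AX) (Cfun J AY)) = Cfun (prod_topology I J) AZ \<and>
        closure_in_fs (point_open_seminorms (prod_topology I J) AZ) (Cfun (prod_topology I J) AZ)
          (tensor_span sZ tp (Cfun I AX) (Cfun J AY)) = Cfun (prod_topology I J) AZ)"
proof (intro conjI impI)
  assume LC: "locally_compact_space (prod_topology I J)"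
  have HP: "Hausdorff_space (prod_topology I J)"
    using I(2) J(2) by (simp add: Hausdorff_space_prod_topology)
  show "tensor_span sZ tp (C0fun I AX) (C0fun J AY) \<subseteq> C0fun (prod_topology I J) AZ"
    by (rule tensor_span_subset[OF function_subspace_C0fun[OF HP Z]])
      (rule tensor_fun_in_C0fun[OF X Y Z tensor cont I(2) J(2)])
  show "closure_in_fs (uniform_seminorms (prod_topology I J) AZ) (C0fun (prod_topology I J) AZ)
      (tensor_span sZ tp (C0fun I AX) (C0fun J AY)) = C0fun (prod_topology I J) AZ"
    by (rule tensor_span_dense_C0[OF X Y Z tensor I(1) J(1) I(2) J(2) LC])
next
  show "tensor_span sZ tp (Cbfun I AX) (Cbfun J AY) \<subseteq> Cbfun (prod_topology I J) AZ"
    by (rule tensor_span_subset[OF function_subspace_Cbfun[OF Z]])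
      (rule tensor_fun_in_Cbfun[OF X Y Z tensor cont])
  show "closure_in_fs (strict_seminorms (prod_topology I J) AZ) (Cbfun (prod_topology I J) AZ)
      (tensor_span sZ tp (Cbfun I AX) (Cbfun J AY)) = Cbfun (prod_topology I J) AZ"
    by (rule tensor_span_dense_strict[OF X Y Z tensor I(1) J(1)])
  show "tensor_span sZ tp (Cfun I AX) (Cfun J AY) \<subseteq> Cfun (prod_topology I J) AZ"
    by (rule tensor_span_subset[OF function_subspace_Cfun[OF Z]]) (rule tensor_fun_in_Cfun[OF tensor cont])
  show "closure_in_fs (compact_open_seminorms (prod_topology I J) AZ) (Cfun (prod_topology I J) AZ)
      (tensor_span sZ tp (Cfun I AX) (Cfun J AY)) = Cfun (prod_topology I J) AZ"
    by (rule tensor_span_dense_compact_open[OF X Y Z tensor I(1) J(1)])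
  show "closure_in_fs (point_open_seminorms (prod_topology I J) AZ) (Cfun (prod_topology I J) AZ)
      (tensor_span sZ tp (Cfun I AX) (Cfun J AY)) = Cfun (prod_topology I J) AZ"
    by (rule tensor_span_dense_point_open[OF X Y Z tensor I(1) J(1)])
qed

end
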